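(* There is a unique formal series solution of the symmetric $q$-$P(A_1)$ equation of the form $$x^{0,+}=\sum_{n\ge1}\sum_{i\le n}x^{0,+}_{n,i}(\Lambda_s,\xi,\mathbf b_s)t^n\phi_s^i,\qquad x^{0,+}_{1,1}=1.$$ Each coefficient $x^{0,+}_{n,i}$ is a rational function of $(\Lambda_s,\xi,\mathbf b_s)$, regular at every $(\Lambda_s,\xi,\mathbf b_s)\in\mathbb C^*\times\mathbb C^*\times\mathcal B_s$ with $1\notin\{q_1^mq_2^n:(m,n)\in\mathbb N^2\setminus\{(0,0)\}\}$, where $q_1=\xi\Lambda_s$, $q_2=\Lambda_s^{-1}$. Moreover, if $|\xi|<1$ and $\Lambda_s\in L_0^s:=\{x\in\mathbb C:1<|x|<|\xi|^{-1}\}$, this condition holds and the series $\sum_{n\ge1}\sum_{m\ge0}x^{0,+}_{n,n-m}(\Lambda_s,\xi,\mathbf b_s)\zeta_1^n\zeta_2^m$ (with $\zeta_1=t\phi_s$, $\zeta_2=\phi_s^{-1}$) converges near $(\zeta_1,\zeta_2)=(0,0)$; more precisely, for every open $L$ with $\overline L\subseteq L_0^s$ there is an open neighbourhood $Z\subseteq\mathbb C^2$ of $\mathbf 0$ on which, uniformly for $(\zeta,\Lambda_s)\in Z\times L$, it converges to a holomorphic function of $(\zeta_1,\zeta_2,\Lambda_s)$.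
   Context: $\mathcal B_s=\{\mathbf b_s=(a,b,c,d)\in\mathbb C^4:a,b,c,d\neq0\}$, $\xi\in\mathbb C^*$. The symmetric $q$-$P(A_1)$ equation for $x=x(t)$ is $$\frac{(x\hat x-\xi t^2)(x\check x-\xi^{-1}t^2)}{(x\hat x-1)(x\check x-1)}=\frac{(x-at)(x-a^{-1}t)(x-bt)(x-b^{-1}t)}{(x-c)(x-c^{-1})(x-d)(x-d^{-1})},$$ with $\hat x=x(\xi t)$, $\check x=x(\xi^{-1}t)$ (understood after clearing denominators). Formal setting: $\Lambda_s,\phi_s$ are indeterminates; the shift $\hat\cdot$ acts by $t\mapsto\xi t$, $\phi_s\mapsto\Lambda_s\phi_s$, $\Lambda_s\mapsto\Lambda_s$, so for $x=\sum_{n\ge1}x_n(\phi_s)t^n$ with $x_n(\phi_s)=\sum_{i\le n}x_{n,i}\phi_s^i$ one has $\hat x=\sum_n\xi^nx_n(\Lambda_s\phi_s)t^n$, $\check x=\sum_n\xi^{-n}x_n(\Lambda_s^{-1}\phi_s)t^n$. A formal series solution is such an $x$ satisfying the (denominator-cleared) equation identically as formal series in $t$ with Laurent-series-in-$\phi_s$ coefficients. *)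

theory Defs
  imports "HOL-Analysis.Analysis"
begin

text \<open>Formal series in t with Laurent-series-in-phi coefficients:
  f n i is the coefficient of t^n phi^i.  All series used below are supported
  in the region i \<le> n, for which the product is given by finite sums.\<close>

type_synonym fser = "nat \<Rightarrow> int \<Rightarrow> complex"

definition fmul :: "fser \<Rightarrow> fser \<Rightarrow> fser" where
  "fmul f g = (\<lambda>N j. \<Sum>k\<in>{..N}. \<Sum>i\<in>{j - int (N - k)..int k}. f k i * g (N - k) (j - i))"

definition fsub :: "fser \<Rightarrow> fser \<Rightarrow> fser" where
  "fsub f g = (\<lambda>n i. f n i - g n i)"

definition fmono :: "complex \<Rightarrow> nat \<Rightarrow> fser" where
  "fmono c k = (\<lambda>n i. if n = k \<and> i = 0 then c else 0)"

text \<open>Shift t -> s t, phi -> l phi: coefficient of t^n phi^i gets multiplied by s^n l^i.\<close>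
definition fshift :: "complex \<Rightarrow> complex \<Rightarrow> fser \<Rightarrow> fser" where
  "fshift s l x = (\<lambda>n i. s ^ n * l powi i * x n i)"

definition ansatz :: "fser \<Rightarrow> bool" where
  "ansatz x \<longleftrightarrow> (\<forall>n i. (n = 0 \<or> i > int n) \<longrightarrow> x n i = 0)"

text \<open>Denominator-cleared symmetric q-P(A1) equation, parameters (Lambda, xi, a, b, c, d).\<close>
definition qPA1_sol ::
  "complex \<Rightarrow> complex \<Rightarrow> complex \<Rightarrow> complex \<Rightarrow> complex \<Rightarrow> complex \<Rightarrow> fser \<Rightarrow> bool" where
  "qPA1_sol \<Lambda> \<xi> a b c d x \<longleftrightarrow>
    (let xh = fshift \<xi> \<Lambda> x; xc = fshift (inverse \<xi>) (inverse \<Lambda>) x in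
     fmul (fmul (fsub (fmul x xh) (fmono \<xi> 2)) (fsub (fmul x xc) (fmono (inverse \<xi>) 2)))
          (fmul (fmul (fsub x (fmono c 0)) (fsub x (fmono (inverse c) 0)))
                (fmul (fsub x (fmono d 0)) (fsub x (fmono (inverse d) 0))))
     =
     fmul (fmul (fsub (fmul x xh) (fmono 1 0)) (fsub (fmul x xc) (fmono 1 0)))
          (fmul (fmul (fsub x (fmono a 1)) (fsub x (fmono (inverse a) 1)))
                (fmul (fsub x (fmono b 1)) (fsub x (fmono (inverse b) 1)))))"

text \<open>Parameters (Lambda_s, xi, a, b, c, d).\<close>
type_synonym params = "complex \<times> complex \<times> complex \<times> complex \<times> complex \<times> complex"

inductive poly6 :: "(params \<Rightarrow> complex) \<Rightarrow> bool" where
  const: "poly6 (\<lambda>_. c)"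
| p1: "poly6 (\<lambda>(l, s, a, b, c, d). l)"
| p2: "poly6 (\<lambda>(l, s, a, b, c, d). s)"
| p3: "poly6 (\<lambda>(l, s, a, b, c, d). a)"
| p4: "poly6 (\<lambda>(l, s, a, b, c, d). b)"
| p5: "poly6 (\<lambda>(l, s, a, b, c, d). c)"
| p6: "poly6 (\<lambda>(l, s, a, b, c, d). d)"
| add: "poly6 f \<Longrightarrow> poly6 g \<Longrightarrow> poly6 (\<lambda>p. f p + g p)"
| mult: "poly6 f \<Longrightarrow> poly6 g \<Longrightarrow> poly6 (\<lambda>p. f p * g p)"

definition rational_regular_on :: "(params \<Rightarrow> complex) \<Rightarrow> params set \<Rightarrow> bool" where
  "rational_regular_on f S \<longleftrightarrow>
     (\<exists>P Q. poly6 P \<and> poly6 Q \<and> (\<forall>p\<in>S. Q p \<noteq> 0 \<and> f p = P p / Q p))"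

definition nonres :: "complex \<Rightarrow> complex \<Rightarrow> bool" where
  "nonres \<Lambda> \<xi> \<longleftrightarrow> (\<forall>m n::nat. (m, n) \<noteq> (0, 0) \<longrightarrow> (\<xi> * \<Lambda>) ^ m * (inverse \<Lambda>) ^ n \<noteq> 1)"

definition regular_params :: "params set" where
  "regular_params = {(l, s, a, b, c, d). l \<noteq> 0 \<and> s \<noteq> 0 \<and> a \<noteq> 0 \<and> b \<noteq> 0 \<and> c \<noteq> 0 \<and> d \<noteq> 0
                       \<and> nonres l s}"

definition L0s :: "complex \<Rightarrow> complex set" where
  "L0s \<xi> = {x. 1 < norm x \<and> norm x < inverse (norm \<xi>)}"

definition holo3 :: "(complex \<times> complex \<times> complex \<Rightarrow> complex) \<Rightarrow> (complex \<times> complex \<times> complex) set \<Rightarrow> bool" where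
  "holo3 F U \<longleftrightarrow> (\<forall>z\<in>U. \<exists>D. (F has_derivative D) (at z) \<and>
       (\<forall>u v w. D (\<i> * u, \<i> * v, \<i> * w) = \<i> * D (u, v, w)))"

end

theory Submission
  imports Defs "HOL-Computational_Algebra.Formal_Power_Series" "HOL-Complex_Analysis.Cauchy_Integral_Formula"
begin

text \<open>Write \<open>x = \<zeta>\<^sub>1 v\<close> with \<open>\<zeta>\<^sub>1 = t \<phi>\<^sub>s\<close>, \<open>\<zeta>\<^sub>2 = \<phi>\<^sub>s\<^sup>-\<^sup>1\<close>. The equation becomes a power series
  equation \<open>G(v) = 0\<close> in \<open>(\<zeta>\<^sub>1, \<zeta>\<^sub>2)\<close> in which the shift acts by \<open>\<zeta>\<^sub>i \<mapsto> q\<^sub>i \<zeta>\<^sub>i\<close>, and the coefficient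
  of \<open>\<zeta>\<^sub>1\<^sup>k \<zeta>\<^sub>2\<^sup>m\<close> in \<open>G(v)\<close> depends on \<open>v\<^sub>k\<^sub>m\<close> only through the term \<open>(q + q\<^sup>-\<^sup>1 - 2) v\<^sub>k\<^sub>m\<close>,
  \<open>q = q\<^sub>1\<^sup>k q\<^sub>2\<^sup>m\<close>. Non-resonance makes this factor nonzero, so the coefficients are determined
  recursively, uniquely, and as rational functions of the parameters.

  For convergence, \<open>\<Lambda>\<^sub>s \<in> L\<^sub>0\<^sup>s\<close> means \<open>|q\<^sub>1|, |q\<^sub>2| < 1\<close>, so \<open>|q - 1| \<ge> 1 - \<rho>\<close> uniformly. Estimating the
  nonlinear remainder in a weighted \<open>\<ell>\<^sup>1\<close> norm, an induction on the degree shows \<open>|v\<^sub>k\<^sub>m| \<le> 2 r\<^sup>-\<^sup>(\<^sup>k\<^sup>+\<^sup>m\<^sup>)\<close>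
  uniformly for \<open>\<Lambda>\<^sub>s\<close> in a closed annulus inside \<open>L\<^sub>0\<^sup>s\<close>. Hence the double series converges uniformly
  near \<open>0\<close>; the coefficients are holomorphic in \<open>\<Lambda>\<^sub>s\<close>, and Cauchy estimates bound their derivatives,
  which gives holomorphy of the sum in all three variables.\<close>

section \<open>Bivariate formal power series\<close>

type_synonym ser2 = "complex fps fps"

definition coeff2 :: "ser2 \<Rightarrow> nat \<Rightarrow> nat \<Rightarrow> complex" where
  "coeff2 f k m = fps_nth (fps_nth f k) m"

definition Ser2 :: "(nat \<Rightarrow> nat \<Rightarrow> complex) \<Rightarrow> ser2" where
  "Ser2 F = Abs_fps (\<lambda>k. Abs_fps (\<lambda>m. F k m))"

lemma coeff2_Ser2 [simp]: "coeff2 (Ser2 F) k m = F k m"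
  by (simp add: coeff2_def Ser2_def)

lemma ser2_eqI: "(\<And>k m. coeff2 f k m = coeff2 g k m) \<Longrightarrow> f = g"
  unfolding coeff2_def by (intro fps_ext) auto

lemma coeff2_mult: "coeff2 (f * g) k m = (\<Sum>i\<le>k. \<Sum>j\<le>m. coeff2 f i j * coeff2 g (k - i) (m - j))"
  by (simp add: coeff2_def fps_mult_nth fps_sum_nth atLeast0AtMost)

lemma coeff2_add [simp]: "coeff2 (f + g) k m = coeff2 f k m + coeff2 g k m"
  and coeff2_diff [simp]: "coeff2 (f - g) k m = coeff2 f k m - coeff2 g k m"
  and coeff2_minus [simp]: "coeff2 (- f) k m = - coeff2 f k m"
  and coeff2_0 [simp]: "coeff2 0 k m = 0"
  and coeff2_one: "coeff2 1 k m = (if k = 0 \<and> m = 0 then 1 else 0)"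
  by (simp_all add: coeff2_def)

lemma coeff2_mult_00 [simp]: "coeff2 (f * g) 0 0 = coeff2 f 0 0 * coeff2 g 0 0"
  by (simp add: coeff2_mult)

lemma coeff2_power_00 [simp]: "coeff2 (f ^ n) 0 0 = coeff2 f 0 0 ^ n"
  by (induction n) (simp_all add: coeff2_one)

definition const2 :: "complex \<Rightarrow> ser2" where
  "const2 c = fps_const (fps_const c)"

lemma coeff2_const2: "coeff2 (const2 c) k m = (if k = 0 \<and> m = 0 then c else 0)"
  by (simp add: coeff2_def const2_def)

lemma coeff2_const2_mult [simp]: "coeff2 (const2 c * f) k m = c * coeff2 f k m"
  by (simp add: coeff2_def const2_def)

lemma const2_1 [simp]: "const2 1 = 1"
  and const2_0 [simp]: "const2 0 = 0"
  and const2_mult: "const2 (a * b) = const2 a * const2 b"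
  and const2_add: "const2 (a + b) = const2 a + const2 b"
  and const2_diff: "const2 (a - b) = const2 a - const2 b"
  and const2_uminus: "const2 (- a) = - const2 a"
  by (simp_all add: const2_def fps_const_mult fps_const_add)

text \<open>\<open>Z1\<close> and \<open>Z2\<close> are the variables \<open>\<zeta>\<^sub>1 = t \<phi>\<^sub>s\<close> and \<open>\<zeta>\<^sub>2 = \<phi>\<^sub>s\<^sup>-\<^sup>1\<close>.\<close>

definition Z1 :: ser2 where "Z1 = fps_X"
definition Z2 :: ser2 where "Z2 = fps_const fps_X"

lemma coeff2_Z1: "coeff2 Z1 k m = (if k = 1 \<and> m = 0 then 1 else 0)"
  by (simp add: coeff2_def Z1_def fps_X_def)

lemma coeff2_Z2: "coeff2 Z2 k m = (if k = 0 \<and> m = 1 then 1 else 0)"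
  by (simp add: coeff2_def Z2_def fps_X_def)

lemma coeff2_00_simps [simp]:
  "coeff2 Z1 0 0 = 0" "coeff2 Z2 0 0 = 0" "coeff2 (const2 c) 0 0 = c" "coeff2 1 0 0 = 1"
  by (simp_all add: coeff2_Z1 coeff2_Z2 coeff2_const2 coeff2_one)

lemma coeff2_Z1_mult: "coeff2 (Z1 * f) k m = (if k = 0 then 0 else coeff2 f (k - 1) m)"
  by (cases k) (simp_all add: coeff2_def Z1_def)

lemma coeff2_Z2_mult: "coeff2 (Z2 * f) k m = (if m = 0 then 0 else coeff2 f k (m - 1))"
  by (cases m) (simp_all add: coeff2_def Z2_def)

lemma coeff2_Z1_power_mult: "coeff2 (Z1 ^ k * f) i j = (if k \<le> i then coeff2 f (i - k) j else 0)"
  by (induction k arbitrary: i) (auto simp: mult.assoc coeff2_Z1_mult Suc_le_eq gr0_conv_Suc)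

lemma coeff2_Z2_power_mult: "coeff2 (Z2 ^ k * f) i j = (if k \<le> j then coeff2 f i (j - k) else 0)"
  by (induction k arbitrary: j) (auto simp: mult.assoc coeff2_Z2_mult Suc_le_eq gr0_conv_Suc)

definition mono2 :: "nat \<Rightarrow> nat \<Rightarrow> ser2" where
  "mono2 k m = Ser2 (\<lambda>i j. if i = k \<and> j = m then 1 else 0)"

lemma coeff2_mono2 [simp]: "coeff2 (mono2 k m) i j = (if i = k \<and> j = m then 1 else 0)"
  by (simp add: mono2_def)

lemma coeff2_Z2_power: "coeff2 (Z2 ^ k) i j = (if i = 0 \<and> j = k then 1 else 0)"
  using coeff2_Z2_power_mult[of k 1 i j] by (auto simp: coeff2_one)

lemma mono2_eq_Z_power: "mono2 k m = Z1 ^ k * Z2 ^ m"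
  by (rule ser2_eqI) (auto simp: coeff2_Z1_power_mult coeff2_Z2_power)

definition scale2 :: "complex \<Rightarrow> complex \<Rightarrow> ser2 \<Rightarrow> ser2" where
  "scale2 s1 s2 f = Ser2 (\<lambda>k m. s1 ^ k * s2 ^ m * coeff2 f k m)"

lemma coeff2_scale2 [simp]: "coeff2 (scale2 s1 s2 f) k m = s1 ^ k * s2 ^ m * coeff2 f k m"
  by (simp add: scale2_def)

lemma scale2_mult: "scale2 s1 s2 (f * g) = scale2 s1 s2 f * scale2 s1 s2 g"
proof (rule ser2_eqI)
  fix k m
  show "coeff2 (scale2 s1 s2 (f * g)) k m = coeff2 (scale2 s1 s2 f * scale2 s1 s2 g) k m"
    unfolding coeff2_scale2 coeff2_mult sum_distrib_left
  proof (intro sum.cong refl)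
    fix i j assume "i \<in> {..k}" "j \<in> {..m}"
    then have "s1 ^ k = s1 ^ i * s1 ^ (k - i)" "s2 ^ m = s2 ^ j * s2 ^ (m - j)"
      by (simp_all flip: power_add)
    then show "s1 ^ k * s2 ^ m * (coeff2 f i j * coeff2 g (k - i) (m - j)) =
      s1 ^ i * s2 ^ j * coeff2 f i j * (s1 ^ (k - i) * s2 ^ (m - j) * coeff2 g (k - i) (m - j))"
      by simp
  qed
qed

lemma scale2_add: "scale2 s1 s2 (f + g) = scale2 s1 s2 f + scale2 s1 s2 g"
  and scale2_diff: "scale2 s1 s2 (f - g) = scale2 s1 s2 f - scale2 s1 s2 g"
  by (rule ser2_eqI, simp add: algebra_simps)+

lemma scale2_const2: "scale2 s1 s2 (const2 c) = const2 c"
  and scale2_Z1: "scale2 s1 s2 Z1 = const2 s1 * Z1"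
  and scale2_Z2: "scale2 s1 s2 Z2 = const2 s2 * Z2"
  and scale2_mono2: "scale2 s1 s2 (mono2 k m) = const2 (s1 ^ k * s2 ^ m) * mono2 k m"
  by (rule ser2_eqI, simp add: coeff2_const2 coeff2_Z1 coeff2_Z2)+

lemma scale2_scale2: "scale2 a b (scale2 c d f) = scale2 (a * c) (b * d) f"
  and scale2_1_1: "scale2 1 1 f = f"
  by (rule ser2_eqI, simp add: power_mult_distrib)+

lemma scale2_1: "scale2 s1 s2 1 = 1"
  using scale2_const2[of s1 s2 1] by simp

lemma scale2_power: "scale2 s1 s2 (f ^ n) = scale2 s1 s2 f ^ n"
  by (induction n) (simp_all add: scale2_1 scale2_mult)

section \<open>Dependence of a coefficient on the top coefficient of its box\<close>

definition box_agree :: "nat \<Rightarrow> nat \<Rightarrow> ser2 \<Rightarrow> ser2 \<Rightarrow> bool" where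
  "box_agree k m f g \<longleftrightarrow> (\<forall>i\<le>k. \<forall>j\<le>m. coeff2 f i j = coeff2 g i j)"

lemma box_agree_refl [intro]: "box_agree k m f f"
  and box_agree_trans: "box_agree k m f g \<Longrightarrow> box_agree k m g h \<Longrightarrow> box_agree k m f h"
  and box_agree_add: "box_agree k m f f' \<Longrightarrow> box_agree k m g g' \<Longrightarrow> box_agree k m (f + g) (f' + g')"
  and box_agree_diff: "box_agree k m f f' \<Longrightarrow> box_agree k m g g' \<Longrightarrow> box_agree k m (f - g) (f' - g')"
  and box_agree_scale2: "box_agree k m f f' \<Longrightarrow> box_agree k m (scale2 s1 s2 f) (scale2 s1 s2 f')"
  by (simp_all add: box_agree_def)

lemma box_agree_mult: "box_agree k m f f' \<Longrightarrow> box_agree k m g g' \<Longrightarrow> box_agree k m (f * g) (f' * g')"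
  unfolding box_agree_def coeff2_mult
  by (intro allI impI sum.cong refl) (metis atMost_iff diff_le_self le_trans)

lemma sum_delta_mult:
  "finite A \<Longrightarrow> (\<Sum>b\<in>A. (if b = m then 1 else 0) * h b) = (if m \<in> A then h m else (0::'a::semiring_1))"
  by (simp add: sum.delta' if_distrib[of "\<lambda>x. x * _"] cong: if_cong)

lemma mono2_mult_box_agree: "box_agree k m (mono2 k m * g) (const2 (coeff2 g 0 0) * mono2 k m)"
  unfolding box_agree_def
proof (intro allI impI)
  fix i j assume ij: "i \<le> k" "j \<le> m"
  have "coeff2 (mono2 k m * g) i j
      = (\<Sum>a\<le>i. if a = k then (\<Sum>b\<le>j. if b = m then coeff2 g (i - k) (j - m) else 0) else 0)"
    unfolding coeff2_mult by (intro sum.cong refl) (auto simp: sum_delta_mult)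
  also have "\<dots> = (if i = k \<and> j = m then coeff2 g 0 0 else 0)"
    using ij by (simp add: sum.delta')
  finally show "coeff2 (mono2 k m * g) i j = coeff2 (const2 (coeff2 g 0 0) * mono2 k m) i j"
    by simp
qed

lemma mono2_mult_self_box_agree:
  assumes "(k, m) \<noteq> (0, 0)"
  shows "box_agree k m (mono2 k m * mono2 k m) 0"
  unfolding box_agree_def coeff2_mult using assms by (auto intro!: sum.neutral)

definition box_perturb :: "nat \<Rightarrow> nat \<Rightarrow> ser2 \<Rightarrow> ser2 \<Rightarrow> complex \<Rightarrow> bool" where
  "box_perturb k m f' f a \<longleftrightarrow> box_agree k m f' (f + const2 a * mono2 k m)"

lemma box_perturb_refl: "box_perturb k m f f 0"
  by (simp add: box_perturb_def box_agree_refl)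

lemma box_perturb_add:
  "box_perturb k m f' f a \<Longrightarrow> box_perturb k m g' g b \<Longrightarrow> box_perturb k m (f' + g') (f + g) (a + b)"
  unfolding box_perturb_def by (drule (1) box_agree_add) (simp add: const2_add algebra_simps)

lemma box_perturb_diff:
  "box_perturb k m f' f a \<Longrightarrow> box_perturb k m g' g b \<Longrightarrow> box_perturb k m (f' - g') (f - g) (a - b)"
  unfolding box_perturb_def by (drule (1) box_agree_diff) (simp add: const2_diff algebra_simps)

lemma box_perturb_scale2:
  "box_perturb k m f' f a \<Longrightarrow> box_perturb k m (scale2 s1 s2 f') (scale2 s1 s2 f) (s1 ^ k * s2 ^ m * a)"
  unfolding box_perturb_def
  by (drule box_agree_scale2[of _ _ _ _ s1 s2])
     (simp add: scale2_add scale2_mult scale2_const2 scale2_mono2 const2_mult algebra_simps)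

lemma box_perturb_mult:
  assumes "(k, m) \<noteq> (0, 0)" "box_perturb k m f' f a" "box_perturb k m g' g b"
  shows "box_perturb k m (f' * g') (f * g) (a * coeff2 g 0 0 + b * coeff2 f 0 0)"
proof -
  let ?M = "mono2 k m"
  have "box_agree k m (f' * g') ((f + const2 a * ?M) * (g + const2 b * ?M))"
    using assms(2,3) unfolding box_perturb_def by (rule box_agree_mult)
  also have "(f + const2 a * ?M) * (g + const2 b * ?M)
     = f * g + const2 a * (?M * g) + const2 b * (?M * f) + const2 (a * b) * (?M * ?M)"
    by (simp add: const2_mult algebra_simps)
  finally have "box_agree k m (f' * g') \<dots>" .
  moreover have "box_agree k m \<dots> (f * g + const2 a * (const2 (coeff2 g 0 0) * ?M)
      + const2 b * (const2 (coeff2 f 0 0) * ?M) + const2 (a * b) * 0)"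
    by (intro box_agree_add box_agree_mult box_agree_refl mono2_mult_box_agree
        mono2_mult_self_box_agree assms(1))
  ultimately show ?thesis
    unfolding box_perturb_def by (auto dest: box_agree_trans simp: const2_mult const2_add algebra_simps)
qed

lemma box_perturb_coeff2: "box_perturb k m f' f a \<Longrightarrow> a = b \<Longrightarrow> coeff2 f' k m = coeff2 f k m + b"
  unfolding box_perturb_def box_agree_def by simp

section \<open>The equation in the variables \<open>\<zeta>\<^sub>1, \<zeta>\<^sub>2\<close> and its formal solution\<close>

text \<open>Throughout, \<open>l\<close> and \<open>s\<close> stand for \<open>\<Lambda>\<^sub>s\<close> and \<open>\<xi>\<close>, so \<open>q\<^sub>1 = s l\<close> and \<open>q\<^sub>2 = l\<^sup>-\<^sup>1\<close>; for
  \<open>x = \<zeta>\<^sub>1 v\<close> the equation reads \<open>\<zeta>\<^sub>1\<^sup>4 qPA1_ser v = 0\<close> (lemma \<open>qPA1_sol_iff_qPA1_ser\<close>).\<close>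

definition qPA1_ser :: "complex \<Rightarrow> complex \<Rightarrow> complex \<Rightarrow> complex \<Rightarrow> complex \<Rightarrow> complex \<Rightarrow> ser2 \<Rightarrow> ser2" where
  "qPA1_ser l s a b c d v =
    (const2 (s * l) * v * scale2 (s * l) (inverse l) v - const2 s * Z2^2) *
    (const2 (inverse (s * l)) * v * scale2 (inverse (s * l)) l v - const2 (inverse s) * Z2^2) *
    (Z1 * v - const2 c) * (Z1 * v - const2 (inverse c)) * (Z1 * v - const2 d) * (Z1 * v - const2 (inverse d))
    - (const2 (s * l) * Z1^2 * v * scale2 (s * l) (inverse l) v - 1) *
      (const2 (inverse (s * l)) * Z1^2 * v * scale2 (inverse (s * l)) l v - 1) *
      (v - const2 a * Z2) * (v - const2 (inverse a) * Z2) * (v - const2 b * Z2) * (v - const2 (inverse b) * Z2)"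

definition diag_coeff :: "complex \<Rightarrow> complex \<Rightarrow> nat \<Rightarrow> nat \<Rightarrow> complex" where
  "diag_coeff l s k m = (s * l) ^ k * (inverse l) ^ m + inverse ((s * l) ^ k * (inverse l) ^ m) - 2"

lemma diag_coeff_eq:
  assumes "l \<noteq> 0" "s \<noteq> 0"
  shows "diag_coeff l s k m = ((s * l) ^ k * (inverse l) ^ m - 1)^2 / ((s * l) ^ k * (inverse l) ^ m)"
  using assms unfolding diag_coeff_def by (simp add: field_simps power2_eq_square)

lemma diag_coeff_nonzero:
  assumes "nonres l s" "l \<noteq> 0" "s \<noteq> 0" "(k, m) \<noteq> (0, 0)"
  shows "diag_coeff l s k m \<noteq> 0"
proof -
  have "(s * l) ^ k * (inverse l) ^ m \<noteq> 1"
    using assms(1,4) unfolding nonres_def by (auto simp: mult.commute)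
  then show ?thesis using assms(2,3) by (simp add: diag_coeff_eq)
qed

lemma coeff2_qPA1_ser_00:
  assumes "coeff2 v 0 0 = 1" "l \<noteq> 0" "s \<noteq> 0" "c \<noteq> 0" "d \<noteq> 0"
  shows "coeff2 (qPA1_ser l s a b c d v) 0 0 = 0"
  using assms unfolding qPA1_ser_def by (simp add: field_simps)

text \<open>The rules for \<open>box_perturb\<close> compute, as the schematic \<open>?A\<close>, by how much the \<open>(k, m)\<close>
  coefficient of the equation moves when \<open>v\<close> is perturbed at \<open>(k, m)\<close> alone; the next lemma
  identifies it as \<open>\<alpha> (q + q\<^sup>-\<^sup>1 - 2)\<close>, \<open>q = q\<^sub>1\<^sup>k q\<^sub>2\<^sup>m\<close>.\<close>

schematic_goal box_perturb_qPA1_ser_schematic: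
  assumes "(k, m) \<noteq> (0, 0)" "box_perturb k m v' v \<alpha>"
  shows "box_perturb k m
    ((const2 (s * l) * v' * scale2 (s * l) (inverse l) v' - const2 s * Z2^2) *
    (const2 (inverse (s * l)) * v' * scale2 (inverse (s * l)) l v' - const2 (inverse s) * Z2^2) *
    (Z1 * v' - const2 c) * (Z1 * v' - const2 (inverse c)) * (Z1 * v' - const2 d) * (Z1 * v' - const2 (inverse d))
    - (const2 (s * l) * Z1^2 * v' * scale2 (s * l) (inverse l) v' - 1) *
      (const2 (inverse (s * l)) * Z1^2 * v' * scale2 (inverse (s * l)) l v' - 1) *
      (v' - const2 a * Z2) * (v' - const2 (inverse a) * Z2) * (v' - const2 b * Z2) * (v' - const2 (inverse b) * Z2))
    ((const2 (s * l) * v * scale2 (s * l) (inverse l) v - const2 s * Z2^2) *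
    (const2 (inverse (s * l)) * v * scale2 (inverse (s * l)) l v - const2 (inverse s) * Z2^2) *
    (Z1 * v - const2 c) * (Z1 * v - const2 (inverse c)) * (Z1 * v - const2 d) * (Z1 * v - const2 (inverse d))
    - (const2 (s * l) * Z1^2 * v * scale2 (s * l) (inverse l) v - 1) *
      (const2 (inverse (s * l)) * Z1^2 * v * scale2 (inverse (s * l)) l v - 1) *
      (v - const2 a * Z2) * (v - const2 (inverse a) * Z2) * (v - const2 b * Z2) * (v - const2 (inverse b) * Z2))
    ?A"
  by (rule box_perturb_refl box_perturb_mult box_perturb_add box_perturb_diff box_perturb_scale2 assms)+

lemma coeff2_qPA1_ser_perturb:
  assumes "(k, m) \<noteq> (0, 0)" "box_perturb k m v' v \<alpha>" "coeff2 v 0 0 = 1"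
    and "l \<noteq> 0" "s \<noteq> 0" "c \<noteq> 0" "d \<noteq> 0"
  shows "coeff2 (qPA1_ser l s a b c d v') k m = coeff2 (qPA1_ser l s a b c d v) k m + \<alpha> * diag_coeff l s k m"
  unfolding qPA1_ser_def
  by (rule box_perturb_coeff2[OF box_perturb_qPA1_ser_schematic[OF assms(1,2)]])
     (use assms(3-) in \<open>simp add: diag_coeff_def power_mult_distrib power_inverse field_simps\<close>)

text \<open>Truncations of the formal solution: \<open>approx_sol \<dots> D\<close> is determined up to total degree \<open>D\<close>.\<close>

primrec approx_sol :: "complex \<Rightarrow> complex \<Rightarrow> complex \<Rightarrow> complex \<Rightarrow> complex \<Rightarrow> complex \<Rightarrow> nat \<Rightarrow> ser2" where
  "approx_sol l s a b c d 0 = 1"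
| "approx_sol l s a b c d (Suc D) = Ser2 (\<lambda>k m.
     if k + m \<le> D then coeff2 (approx_sol l s a b c d D) k m
     else if k + m = Suc D then - coeff2 (qPA1_ser l s a b c d (approx_sol l s a b c d D)) k m / diag_coeff l s k m
     else 0)"

lemma coeff2_approx_sol_eq_0: "D < k + m \<Longrightarrow> coeff2 (approx_sol l s a b c d D) k m = 0"
  by (induction D arbitrary: k m) (auto simp: coeff2_one)

lemma coeff2_approx_sol_stable:
  "D \<le> D' \<Longrightarrow> k + m \<le> D \<Longrightarrow> coeff2 (approx_sol l s a b c d D') k m = coeff2 (approx_sol l s a b c d D) k m"
  by (induction D' rule: dec_induct) auto

lemma coeff2_approx_sol_00 [simp]: "coeff2 (approx_sol l s a b c d D) 0 0 = 1"
  using coeff2_approx_sol_stable[of 0 D 0 0] by (simp add: coeff2_one)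

lemma coeff2_approx_sol_top: "k + m = Suc D \<Longrightarrow>
  coeff2 (approx_sol l s a b c d (Suc D)) k m
    = - coeff2 (qPA1_ser l s a b c d (approx_sol l s a b c d D)) k m / diag_coeff l s k m"
  by simp

definition formal_sol :: "complex \<Rightarrow> complex \<Rightarrow> complex \<Rightarrow> complex \<Rightarrow> complex \<Rightarrow> complex \<Rightarrow> ser2" where
  "formal_sol l s a b c d = Ser2 (\<lambda>k m. coeff2 (approx_sol l s a b c d (k + m)) k m)"

lemma coeff2_formal_sol:
  "k + m \<le> D \<Longrightarrow> coeff2 (formal_sol l s a b c d) k m = coeff2 (approx_sol l s a b c d D) k m"
  by (simp add: formal_sol_def coeff2_approx_sol_stable)

lemma coeff2_formal_sol_00: "coeff2 (formal_sol l s a b c d) 0 0 = 1"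
  by (simp add: formal_sol_def)

lemma coeff2_qPA1_ser_step:
  assumes reg: "(l, s, a, b, c, d) \<in> regular_params" and D: "k + m = Suc D"
    and below: "\<And>i j. i \<le> k \<Longrightarrow> j \<le> m \<Longrightarrow> (i, j) \<noteq> (k, m) \<Longrightarrow>
      coeff2 v i j = coeff2 (approx_sol l s a b c d D) i j"
  shows "coeff2 (qPA1_ser l s a b c d v) k m
    = diag_coeff l s k m * (coeff2 v k m - coeff2 (approx_sol l s a b c d (Suc D)) k m)"
proof -
  have km: "(k, m) \<noteq> (0, 0)" using D by auto
  have nz: "l \<noteq> 0" "s \<noteq> 0" "c \<noteq> 0" "d \<noteq> 0" "nonres l s"
    using reg by (auto simp: regular_params_def)
  have "box_perturb k m v (approx_sol l s a b c d D) (coeff2 v k m)"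
    unfolding box_perturb_def box_agree_def
    using below D by (auto simp: coeff2_approx_sol_eq_0)
  then have "coeff2 (qPA1_ser l s a b c d v) k m
      = coeff2 (qPA1_ser l s a b c d (approx_sol l s a b c d D)) k m + coeff2 v k m * diag_coeff l s k m"
    using nz km by (intro coeff2_qPA1_ser_perturb) auto
  then show ?thesis
    unfolding coeff2_approx_sol_top[OF D] using diag_coeff_nonzero[OF nz(5,1,2) km]
    by (simp add: field_simps del: approx_sol.simps)
qed

lemma qPA1_ser_formal_sol:
  assumes reg: "(l, s, a, b, c, d) \<in> regular_params"
  shows "qPA1_ser l s a b c d (formal_sol l s a b c d) = 0"
proof (rule ser2_eqI)
  fix k m
  show "coeff2 (qPA1_ser l s a b c d (formal_sol l s a b c d)) k m = coeff2 0 k m"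
  proof (cases "k + m")
    case 0
    then show ?thesis
      using reg by (auto simp: regular_params_def coeff2_formal_sol_00 intro: coeff2_qPA1_ser_00)
  next
    case (Suc D)
    have "coeff2 (qPA1_ser l s a b c d (formal_sol l s a b c d)) k m
        = diag_coeff l s k m * (coeff2 (formal_sol l s a b c d) k m - coeff2 (approx_sol l s a b c d (Suc D)) k m)"
      using Suc by (intro coeff2_qPA1_ser_step[OF reg Suc] coeff2_formal_sol) auto
    also have "coeff2 (formal_sol l s a b c d) k m = coeff2 (approx_sol l s a b c d (Suc D)) k m"
      using Suc by (intro coeff2_formal_sol) simp
    finally show ?thesis by simp
  qed
qed

lemma qPA1_ser_unique:
  assumes reg: "(l, s, a, b, c, d) \<in> regular_params"
    and v: "coeff2 v 0 0 = 1" "qPA1_ser l s a b c d v = 0"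
  shows "v = formal_sol l s a b c d"
proof -
  have diag: "diag_coeff l s k m \<noteq> 0" if "(k, m) \<noteq> (0, 0)" for k m
    using reg that by (intro diag_coeff_nonzero) (auto simp: regular_params_def)
  have "k + m \<le> D \<Longrightarrow> coeff2 v k m = coeff2 (approx_sol l s a b c d D) k m" for D k m
  proof (induction D arbitrary: k m)
    case 0
    then show ?case using v(1) by (auto simp: coeff2_one)
  next
    case (Suc D)
    show ?case
    proof (cases "k + m = Suc D")
      case True
      have "coeff2 (qPA1_ser l s a b c d v) k m
          = diag_coeff l s k m * (coeff2 v k m - coeff2 (approx_sol l s a b c d (Suc D)) k m)"
        using True by (intro coeff2_qPA1_ser_step[OF reg] Suc.IH) auto
      moreover have "(k, m) \<noteq> (0, 0)" using True by auto
      ultimately show ?thesis using v(2) diag[of k m] by (auto simp del: approx_sol.simps)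
    next
      case False
      then show ?thesis using Suc by simp
    qed
  qed
  then show ?thesis
    by (intro ser2_eqI) (simp add: formal_sol_def)
qed

section \<open>Back to series in \<open>t\<close> and \<open>\<phi>\<^sub>s\<close>\<close>

text \<open>The coefficient of \<open>t\<^sup>n \<phi>\<^sub>s\<^sup>i\<close> becomes the coefficient of \<open>\<zeta>\<^sub>1\<^sup>n \<zeta>\<^sub>2\<^sup>n\<^sup>-\<^sup>i\<close>.\<close>

definition to_ser2 :: "fser \<Rightarrow> ser2" where
  "to_ser2 x = Ser2 (\<lambda>k m. x k (int k - int m))"

lemma coeff2_to_ser2 [simp]: "coeff2 (to_ser2 x) k m = x k (int k - int m)"
  by (simp add: to_ser2_def)

lemma sum_int_interval_reindex: "(\<Sum>i\<in>{a - int M..a}. h i) = (\<Sum>m\<le>M. h (a - int m))"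
  by (rule sum.reindex_bij_witness[of _ "\<lambda>i. a - int i" "\<lambda>i. nat (a - i)"]) auto

lemma to_ser2_fmul: "to_ser2 (fmul f g) = to_ser2 f * to_ser2 g"
proof (rule ser2_eqI)
  fix N M
  have "coeff2 (to_ser2 (fmul f g)) N M =
    (\<Sum>k\<le>N. \<Sum>i\<in>{int k - int M..int k}. f k i * g (N - k) (int N - int M - i))"
    unfolding coeff2_to_ser2 fmul_def by (intro sum.cong refl) (simp add: algebra_simps)
  also have "\<dots> = (\<Sum>k\<le>N. \<Sum>m\<le>M. f k (int k - int m) * g (N - k) (int N - int M - (int k - int m)))"
    by (simp add: sum_int_interval_reindex)
  also have "\<dots> = (\<Sum>k\<le>N. \<Sum>m\<le>M. f k (int k - int m) * g (N - k) (int (N - k) - int (M - m)))"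
    by (intro sum.cong refl) (auto simp: of_nat_diff algebra_simps)
  also have "\<dots> = coeff2 (to_ser2 f * to_ser2 g) N M"
    by (simp add: coeff2_mult)
  finally show "coeff2 (to_ser2 (fmul f g)) N M = coeff2 (to_ser2 f * to_ser2 g) N M" .
qed

lemma to_ser2_fsub: "to_ser2 (fsub f g) = to_ser2 f - to_ser2 g"
  by (rule ser2_eqI) (simp add: fsub_def)

lemma to_ser2_fmono: "to_ser2 (fmono c k) = const2 c * mono2 k k"
  by (rule ser2_eqI) (auto simp: fmono_def)

lemma to_ser2_fshift:
  assumes "l \<noteq> 0"
  shows "to_ser2 (fshift s l x) = scale2 (s * l) (inverse l) (to_ser2 x)"
proof (rule ser2_eqI)
  fix k m
  have "l powi (int k - int m) = l ^ k * inverse l ^ m"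
    using assms by (simp add: power_int_diff power_inverse divide_inverse)
  then show "coeff2 (to_ser2 (fshift s l x)) k m = coeff2 (scale2 (s * l) (inverse l) (to_ser2 x)) k m"
    by (simp add: fshift_def power_mult_distrib)
qed

definition upper_supported :: "fser \<Rightarrow> bool" where
  "upper_supported f \<longleftrightarrow> (\<forall>n j. int n < j \<longrightarrow> f n j = 0)"

lemma upper_supported_fmul: "upper_supported (fmul f g)"
  unfolding upper_supported_def fmul_def by auto

lemma upper_supported_ansatz: "ansatz y \<Longrightarrow> upper_supported y"
  by (simp add: ansatz_def upper_supported_def)

lemma to_ser2_inj:
  assumes "upper_supported f" "upper_supported g" "to_ser2 f = to_ser2 g"
  shows "f = g"
proof (intro ext)
  fix n j
  show "f n j = g n j"
  proof (cases "int n < j")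
    case True
    then show ?thesis using assms(1,2) by (simp add: upper_supported_def)
  next
    case False
    then have j: "j = int n - int (nat (int n - j))" by simp
    have "coeff2 (to_ser2 f) n (nat (int n - j)) = coeff2 (to_ser2 g) n (nat (int n - j))"
      using assms(3) by simp
    then show ?thesis by (subst (1 2) j) simp
  qed
qed

lemma qPA1_sol_iff_qPA1_ser:
  assumes "l \<noteq> 0" "s \<noteq> 0" "to_ser2 x = Z1 * v"
  shows "qPA1_sol l s a b c d x \<longleftrightarrow> qPA1_ser l s a b c d v = 0"
proof -
  let ?xh = "fshift s l x" and ?xc = "fshift (inverse s) (inverse l) x"
  have xh: "to_ser2 ?xh = const2 (s * l) * Z1 * scale2 (s * l) (inverse l) v"
    using assms by (simp add: to_ser2_fshift scale2_mult scale2_Z1)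
  have xc: "to_ser2 ?xc = const2 (inverse (s * l)) * Z1 * scale2 (inverse (s * l)) l v"
    using assms by (simp add: to_ser2_fshift scale2_mult scale2_Z1 mult.commute)
  have mono: "mono2 2 2 = Z1^2 * Z2^2" "mono2 0 0 = 1"
    by (simp_all add: mono2_eq_Z_power)
  have f1: "to_ser2 (fsub (fmul x ?xh) (fmono s 2))
      = Z1^2 * (const2 (s * l) * v * scale2 (s * l) (inverse l) v - const2 s * Z2^2)"
    by (simp add: to_ser2_fsub to_ser2_fmul to_ser2_fmono xh assms(3) mono algebra_simps power2_eq_square)
  have f2: "to_ser2 (fsub (fmul x ?xc) (fmono (inverse s) 2))
      = Z1^2 * (const2 (inverse (s * l)) * v * scale2 (inverse (s * l)) l v - const2 (inverse s) * Z2^2)"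
    by (simp add: to_ser2_fsub to_ser2_fmul to_ser2_fmono xc assms(3) mono algebra_simps power2_eq_square)
  have f3: "to_ser2 (fsub (fmul x ?xh) (fmono 1 0))
      = const2 (s * l) * Z1^2 * v * scale2 (s * l) (inverse l) v - 1"
    by (simp add: to_ser2_fsub to_ser2_fmul to_ser2_fmono xh assms(3) mono algebra_simps power2_eq_square)
  have f4: "to_ser2 (fsub (fmul x ?xc) (fmono 1 0))
      = const2 (inverse (s * l)) * Z1^2 * v * scale2 (inverse (s * l)) l v - 1"
    by (simp add: to_ser2_fsub to_ser2_fmul to_ser2_fmono xc assms(3) mono algebra_simps power2_eq_square)
  have f5: "to_ser2 (fsub x (fmono e 0)) = Z1 * v - const2 e" for e
    by (simp add: to_ser2_fsub to_ser2_fmono assms(3) mono)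
  have f6: "to_ser2 (fsub x (fmono e 1)) = Z1 * (v - const2 e * Z2)" for e
    by (simp add: to_ser2_fsub to_ser2_fmono assms(3) mono2_eq_Z_power algebra_simps)
  have ring_identity: "(z^2*A)*(z^2*B)*C1*C2*C3*C4 - F7*F8*(z*D1)*(z*D2)*(z*D3)*(z*D4)
       = z^4*(A*B*C1*C2*C3*C4 - F7*F8*D1*D2*D3*D4)" for z A B C1 C2 C3 C4 F7 F8 D1 D2 D3 D4 :: ser2
    by (simp add: algebra_simps power2_eq_square power4_eq_xxxx)
  have "qPA1_sol l s a b c d x \<longleftrightarrow>
     to_ser2 (fmul (fmul (fsub (fmul x ?xh) (fmono s 2)) (fsub (fmul x ?xc) (fmono (inverse s) 2)))
          (fmul (fmul (fsub x (fmono c 0)) (fsub x (fmono (inverse c) 0)))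
                (fmul (fsub x (fmono d 0)) (fsub x (fmono (inverse d) 0)))))
     = to_ser2 (fmul (fmul (fsub (fmul x ?xh) (fmono 1 0)) (fsub (fmul x ?xc) (fmono 1 0)))
          (fmul (fmul (fsub x (fmono a 1)) (fsub x (fmono (inverse a) 1)))
                (fmul (fsub x (fmono b 1)) (fsub x (fmono (inverse b) 1)))))"
    unfolding qPA1_sol_def Let_def using to_ser2_inj upper_supported_fmul by metis
  also have "\<dots> \<longleftrightarrow> Z1^4 * qPA1_ser l s a b c d v = 0"
    unfolding to_ser2_fmul f1 f2 f3 f4 f5 f6 qPA1_ser_def
    by (subst ring_identity[symmetric]) (simp add: mult.assoc)
  also have "\<dots> \<longleftrightarrow> qPA1_ser l s a b c d v = 0"
    by (simp add: Z1_def)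
  finally show ?thesis .
qed

definition sol_coeff :: "nat \<Rightarrow> int \<Rightarrow> params \<Rightarrow> complex" where
  "sol_coeff n i p = (case p of (l, s, a, b, c, d) \<Rightarrow>
     if 1 \<le> n \<and> i \<le> int n then coeff2 (formal_sol l s a b c d) (n - 1) (nat (int n - i)) else 0)"

lemma sol_coeff_eq_formal_sol:
  "1 \<le> n \<Longrightarrow> sol_coeff n (int n - int m) (l, s, a, b, c, d) = coeff2 (formal_sol l s a b c d) (n - 1) m"
  by (simp add: sol_coeff_def)

lemma to_ser2_sol_coeff: "to_ser2 (\<lambda>n i. sol_coeff n i (l, s, a, b, c, d)) = Z1 * formal_sol l s a b c d"
  by (rule ser2_eqI) (auto simp: sol_coeff_def coeff2_Z1_mult)

lemma ansatz_sol_coeff: "ansatz (\<lambda>n i. sol_coeff n i (l, s, a, b, c, d))"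
  by (simp add: ansatz_def sol_coeff_def)

lemma sol_coeff_1_1: "sol_coeff 1 1 (l, s, a, b, c, d) = 1"
  by (simp add: sol_coeff_def coeff2_formal_sol_00)

lemma to_ser2_ansatz:
  assumes "ansatz y"
  shows "to_ser2 y = Z1 * Ser2 (\<lambda>k m. coeff2 (to_ser2 y) (k + 1) m)"
proof (rule ser2_eqI)
  fix k m
  show "coeff2 (to_ser2 y) k m = coeff2 (Z1 * Ser2 (\<lambda>k m. coeff2 (to_ser2 y) (k + 1) m)) k m"
    unfolding coeff2_Z1_mult using assms by (cases k) (auto simp: ansatz_def)
qed

theorem sol_coeff_unique_solution:
  assumes reg: "(l, s, a, b, c, d) \<in> regular_params"
  shows "qPA1_sol l s a b c d (\<lambda>n i. sol_coeff n i (l, s, a, b, c, d))"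
    and "ansatz y \<Longrightarrow> y 1 1 = 1 \<Longrightarrow> qPA1_sol l s a b c d y \<Longrightarrow> y = (\<lambda>n i. sol_coeff n i (l, s, a, b, c, d))"
proof -
  have nz: "l \<noteq> 0" "s \<noteq> 0" using reg by (auto simp: regular_params_def)
  show "qPA1_sol l s a b c d (\<lambda>n i. sol_coeff n i (l, s, a, b, c, d))"
    using qPA1_sol_iff_qPA1_ser[OF nz to_ser2_sol_coeff] qPA1_ser_formal_sol[OF reg] by simp
  assume y: "ansatz y" "y 1 1 = 1" "qPA1_sol l s a b c d y"
  define v where "v = Ser2 (\<lambda>k m. coeff2 (to_ser2 y) (k + 1) m)"
  have yv: "to_ser2 y = Z1 * v" unfolding v_def by (rule to_ser2_ansatz[OF y(1)])
  have "v = formal_sol l s a b c d"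
    using qPA1_ser_unique[OF reg] qPA1_sol_iff_qPA1_ser[OF nz yv] y(2,3) by (simp add: v_def)
  then have "to_ser2 y = to_ser2 (\<lambda>n i. sol_coeff n i (l, s, a, b, c, d))"
    using yv to_ser2_sol_coeff by simp
  then show "y = (\<lambda>n i. sol_coeff n i (l, s, a, b, c, d))"
    using to_ser2_inj upper_supported_ansatz y(1) ansatz_sol_coeff by blast
qed

section \<open>Rationality of the coefficients\<close>

lemma rational_regular_onI:
  "poly6 P \<Longrightarrow> poly6 Q \<Longrightarrow> (\<And>p. p \<in> S \<Longrightarrow> Q p \<noteq> 0 \<and> f p = P p / Q p) \<Longrightarrow> rational_regular_on f S"
  unfolding rational_regular_on_def by blast

lemma rational_regular_onE:
  assumes "rational_regular_on f S"
  obtains P Q where "poly6 P" "poly6 Q" "\<And>p. p \<in> S \<Longrightarrow> Q p \<noteq> 0" "\<And>p. p \<in> S \<Longrightarrow> f p = P p / Q p"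
  using assms unfolding rational_regular_on_def by blast

lemma rational_regular_on_poly6: "poly6 f \<Longrightarrow> rational_regular_on f S"
  by (rule rational_regular_onI[of f "\<lambda>_. 1"]) (auto intro: poly6.const)

lemma rational_regular_on_const: "rational_regular_on (\<lambda>_. c) S"
  by (intro rational_regular_on_poly6 poly6.const)

lemma rational_regular_on_add:
  assumes "rational_regular_on f S" "rational_regular_on g S"
  shows "rational_regular_on (\<lambda>p. f p + g p) S"
proof -
  obtain P Q where "poly6 P" "poly6 Q" "\<And>p. p \<in> S \<Longrightarrow> Q p \<noteq> 0" "\<And>p. p \<in> S \<Longrightarrow> f p = P p / Q p"
    using assms(1) by (rule rational_regular_onE) blast
  moreover obtain P' Q' where "poly6 P'" "poly6 Q'"
    "\<And>p. p \<in> S \<Longrightarrow> Q' p \<noteq> 0" "\<And>p. p \<in> S \<Longrightarrow> g p = P' p / Q' p"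
    using assms(2) by (rule rational_regular_onE) blast
  ultimately show ?thesis
    by (intro rational_regular_onI[of "\<lambda>p. P p * Q' p + P' p * Q p" "\<lambda>p. Q p * Q' p"])
       (auto intro!: poly6.add poly6.mult simp: field_simps)
qed

lemma rational_regular_on_mult:
  assumes "rational_regular_on f S" "rational_regular_on g S"
  shows "rational_regular_on (\<lambda>p. f p * g p) S"
proof -
  obtain P Q where "poly6 P" "poly6 Q" "\<And>p. p \<in> S \<Longrightarrow> Q p \<noteq> 0" "\<And>p. p \<in> S \<Longrightarrow> f p = P p / Q p"
    using assms(1) by (rule rational_regular_onE) blast
  moreover obtain P' Q' where "poly6 P'" "poly6 Q'"
    "\<And>p. p \<in> S \<Longrightarrow> Q' p \<noteq> 0" "\<And>p. p \<in> S \<Longrightarrow> g p = P' p / Q' p"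
    using assms(2) by (rule rational_regular_onE) blast
  ultimately show ?thesis
    by (intro rational_regular_onI[of "\<lambda>p. P p * P' p" "\<lambda>p. Q p * Q' p"])
       (auto intro!: poly6.mult)
qed

lemma rational_regular_on_divide:
  assumes "rational_regular_on f S" "rational_regular_on g S" and g: "\<And>p. p \<in> S \<Longrightarrow> g p \<noteq> 0"
  shows "rational_regular_on (\<lambda>p. f p / g p) S"
proof -
  obtain P Q where PQ: "poly6 P" "poly6 Q"
    and f: "\<And>p. p \<in> S \<Longrightarrow> Q p \<noteq> 0" "\<And>p. p \<in> S \<Longrightarrow> f p = P p / Q p"
    using assms(1) by (rule rational_regular_onE) blast
  obtain P' Q' where PQ': "poly6 P'" "poly6 Q'"
    and g': "\<And>p. p \<in> S \<Longrightarrow> Q' p \<noteq> 0" "\<And>p. p \<in> S \<Longrightarrow> g p = P' p / Q' p"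
    using assms(2) by (rule rational_regular_onE) blast
  show ?thesis
  proof (rule rational_regular_onI[of "\<lambda>p. P p * Q' p" "\<lambda>p. Q p * P' p"])
    fix p assume p: "p \<in> S"
    then have "P' p \<noteq> 0" using g[OF p] g'[OF p] by auto
    then show "Q p * P' p \<noteq> 0 \<and> f p / g p = P p * Q' p / (Q p * P' p)"
      using f[OF p] g'[OF p] g[OF p] by (simp add: field_simps)
  qed (use PQ PQ' in \<open>auto intro: poly6.mult\<close>)
qed

lemma rational_regular_on_inverse:
  "rational_regular_on f S \<Longrightarrow> (\<And>p. p \<in> S \<Longrightarrow> f p \<noteq> 0) \<Longrightarrow> rational_regular_on (\<lambda>p. inverse (f p)) S"
  using rational_regular_on_divide[OF rational_regular_on_const[of 1]] by (simp add: inverse_eq_divide)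

lemma rational_regular_on_minus: "rational_regular_on f S \<Longrightarrow> rational_regular_on (\<lambda>p. - f p) S"
  using rational_regular_on_mult[OF rational_regular_on_const[of "-1"]] by simp

lemma rational_regular_on_diff:
  "rational_regular_on f S \<Longrightarrow> rational_regular_on g S \<Longrightarrow> rational_regular_on (\<lambda>p. f p - g p) S"
  using rational_regular_on_add[OF _ rational_regular_on_minus] by simp

lemma rational_regular_on_power: "rational_regular_on f S \<Longrightarrow> rational_regular_on (\<lambda>p. f p ^ n) S"
  by (induction n) (auto intro: rational_regular_on_const rational_regular_on_mult)

lemma rational_regular_on_sum:
  "finite A \<Longrightarrow> (\<And>i. i \<in> A \<Longrightarrow> rational_regular_on (f i) S) \<Longrightarrow> rational_regular_on (\<lambda>p. \<Sum>i\<in>A. f i p) S"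
  by (induction A rule: finite_induct) (auto intro: rational_regular_on_const rational_regular_on_add)

lemma rational_regular_on_if:
  "(P \<Longrightarrow> rational_regular_on f S) \<Longrightarrow> (\<not> P \<Longrightarrow> rational_regular_on g S) \<Longrightarrow>
    rational_regular_on (\<lambda>p. if P then f p else g p) S"
  by (cases P) auto

definition par_l :: "params \<Rightarrow> complex" where "par_l p = fst p"
definition par_s :: "params \<Rightarrow> complex" where "par_s p = fst (snd p)"
definition par_a :: "params \<Rightarrow> complex" where "par_a p = fst (snd (snd p))"
definition par_b :: "params \<Rightarrow> complex" where "par_b p = fst (snd (snd (snd p)))"
definition par_c :: "params \<Rightarrow> complex" where "par_c p = fst (snd (snd (snd (snd p))))"
definition par_d :: "params \<Rightarrow> complex" where "par_d p = snd (snd (snd (snd (snd p))))"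

lemmas par_defs = par_l_def par_s_def par_a_def par_b_def par_c_def par_d_def

lemma rational_regular_on_par:
  "rational_regular_on par_l S" "rational_regular_on par_s S" "rational_regular_on par_a S"
  "rational_regular_on par_b S" "rational_regular_on par_c S" "rational_regular_on par_d S"
proof -
  have "par_l = (\<lambda>(l, s, a, b, c, d). l)" "par_s = (\<lambda>(l, s, a, b, c, d). s)"
    "par_a = (\<lambda>(l, s, a, b, c, d). a)" "par_b = (\<lambda>(l, s, a, b, c, d). b)"
    "par_c = (\<lambda>(l, s, a, b, c, d). c)" "par_d = (\<lambda>(l, s, a, b, c, d). d)"
    by (auto simp: par_defs fun_eq_iff)
  then have "poly6 par_l" "poly6 par_s" "poly6 par_a" "poly6 par_b" "poly6 par_c" "poly6 par_d"
    using poly6.p1 poly6.p2 poly6.p3 poly6.p4 poly6.p5 poly6.p6 by simp_all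
  then show "rational_regular_on par_l S" "rational_regular_on par_s S" "rational_regular_on par_a S"
    "rational_regular_on par_b S" "rational_regular_on par_c S" "rational_regular_on par_d S"
    by (simp_all add: rational_regular_on_poly6)
qed

lemma rational_regular_on_inverse_par:
  "rational_regular_on (\<lambda>p. inverse (par_l p)) regular_params"
  "rational_regular_on (\<lambda>p. inverse (par_s p)) regular_params"
  "rational_regular_on (\<lambda>p. inverse (par_a p)) regular_params"
  "rational_regular_on (\<lambda>p. inverse (par_b p)) regular_params"
  "rational_regular_on (\<lambda>p. inverse (par_c p)) regular_params"
  "rational_regular_on (\<lambda>p. inverse (par_d p)) regular_params"
  "rational_regular_on (\<lambda>p. inverse (par_s p * par_l p)) regular_params"
  by (intro rational_regular_on_inverse rational_regular_on_mult rational_regular_on_par;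
      auto simp: regular_params_def par_defs)+

definition rational_regular_ser :: "(params \<Rightarrow> ser2) \<Rightarrow> params set \<Rightarrow> bool" where
  "rational_regular_ser F S \<longleftrightarrow> (\<forall>k m. rational_regular_on (\<lambda>p. coeff2 (F p) k m) S)"

lemma rational_regular_ser_const: "rational_regular_ser (\<lambda>_. f) S"
  unfolding rational_regular_ser_def by (auto intro!: rational_regular_on_const)

lemma rational_regular_ser_add:
  "rational_regular_ser F S \<Longrightarrow> rational_regular_ser G S \<Longrightarrow> rational_regular_ser (\<lambda>p. F p + G p) S"
  unfolding rational_regular_ser_def by (auto intro!: rational_regular_on_add)

lemma rational_regular_ser_diff:
  "rational_regular_ser F S \<Longrightarrow> rational_regular_ser G S \<Longrightarrow> rational_regular_ser (\<lambda>p. F p - G p) S"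
  unfolding rational_regular_ser_def by (auto intro!: rational_regular_on_diff)

lemma rational_regular_ser_mult:
  "rational_regular_ser F S \<Longrightarrow> rational_regular_ser G S \<Longrightarrow> rational_regular_ser (\<lambda>p. F p * G p) S"
  unfolding rational_regular_ser_def coeff2_mult
  by (auto intro!: rational_regular_on_sum rational_regular_on_mult)

lemma rational_regular_ser_power: "rational_regular_ser F S \<Longrightarrow> rational_regular_ser (\<lambda>p. F p ^ n) S"
  by (induction n) (auto intro: rational_regular_ser_const rational_regular_ser_mult)

lemma rational_regular_ser_const2:
  "rational_regular_on f S \<Longrightarrow> rational_regular_ser (\<lambda>p. const2 (f p)) S"
  unfolding rational_regular_ser_def coeff2_const2
  by (auto intro!: rational_regular_on_if rational_regular_on_const)

lemma rational_regular_ser_scale2: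
  "rational_regular_on f S \<Longrightarrow> rational_regular_on g S \<Longrightarrow> rational_regular_ser F S \<Longrightarrow>
    rational_regular_ser (\<lambda>p. scale2 (f p) (g p) (F p)) S"
  unfolding rational_regular_ser_def coeff2_scale2
  by (auto intro!: rational_regular_on_mult rational_regular_on_power)

lemma rational_regular_ser_qPA1_ser:
  assumes "rational_regular_ser V regular_params"
  shows "rational_regular_ser
    (\<lambda>p. qPA1_ser (par_l p) (par_s p) (par_a p) (par_b p) (par_c p) (par_d p) (V p)) regular_params"
  unfolding qPA1_ser_def
  by (intro rational_regular_ser_mult rational_regular_ser_add rational_regular_ser_diff
      rational_regular_ser_const rational_regular_ser_power rational_regular_ser_const2
      rational_regular_ser_scale2 rational_regular_on_mult assms rational_regular_on_par
      rational_regular_on_inverse_par)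

lemma rational_regular_on_diag_coeff:
  "rational_regular_on (\<lambda>p. diag_coeff (par_l p) (par_s p) k m) regular_params"
  unfolding diag_coeff_def
  by (intro rational_regular_on_diff rational_regular_on_add rational_regular_on_const
      rational_regular_on_mult rational_regular_on_power rational_regular_on_inverse
      rational_regular_on_par rational_regular_on_inverse_par)
     (auto simp: regular_params_def par_defs)

lemma rational_regular_ser_approx_sol:
  "rational_regular_ser
    (\<lambda>p. approx_sol (par_l p) (par_s p) (par_a p) (par_b p) (par_c p) (par_d p) D) regular_params"
proof (induction D)
  case 0
  then show ?case by (simp add: rational_regular_ser_const)
next
  case (Suc D)
  let ?A = "\<lambda>p. approx_sol (par_l p) (par_s p) (par_a p) (par_b p) (par_c p) (par_d p) D"
  have diag: "diag_coeff (par_l p) (par_s p) k m \<noteq> 0" if "p \<in> regular_params" "k + m = Suc D" for p k m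
    using that by (intro diag_coeff_nonzero) (auto simp: regular_params_def par_defs)
  have top: "rational_regular_on (\<lambda>p. - coeff2 (qPA1_ser (par_l p) (par_s p) (par_a p) (par_b p) (par_c p)
      (par_d p) (?A p)) k m / diag_coeff (par_l p) (par_s p) k m) regular_params"
    if "k + m = Suc D" for k m
    using rational_regular_ser_qPA1_ser[OF Suc] diag that unfolding rational_regular_ser_def
    by (intro rational_regular_on_divide rational_regular_on_minus rational_regular_on_diag_coeff) auto
  show ?case
    unfolding rational_regular_ser_def approx_sol.simps coeff2_Ser2
  proof (intro allI rational_regular_on_if rational_regular_on_const)
    fix k m
    show "rational_regular_on (\<lambda>p. coeff2 (?A p) k m) regular_params"
      using Suc unfolding rational_regular_ser_def by blast
    show "k + m = Suc D \<Longrightarrow> rational_regular_on (\<lambda>p. - coeff2 (qPA1_ser (par_l p) (par_s p) (par_a p)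
        (par_b p) (par_c p) (par_d p) (?A p)) k m / diag_coeff (par_l p) (par_s p) k m) regular_params"
      by (rule top)
  qed
qed

lemma rational_regular_on_sol_coeff: "rational_regular_on (sol_coeff n i) regular_params"
proof -
  have eq: "sol_coeff n i p = (if 1 \<le> n \<and> i \<le> int n then coeff2 (approx_sol (par_l p) (par_s p) (par_a p)
      (par_b p) (par_c p) (par_d p) (n - 1 + nat (int n - i))) (n - 1) (nat (int n - i)) else 0)" for p
    by (cases p) (simp add: sol_coeff_def formal_sol_def par_defs)
  show ?thesis
    unfolding eq using rational_regular_ser_approx_sol unfolding rational_regular_ser_def
    by (intro rational_regular_on_if rational_regular_on_const) auto
qed

section \<open>Weighted norms\<close>

text \<open>Truncating to the box \<open>[0,n]\<^sup>2\<close> keeps the norm finite while preserving submultiplicativity,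
  since coefficients of a product in the box only involve coefficients of the factors in the box.\<close>

definition wnorm :: "real \<Rightarrow> nat \<Rightarrow> ser2 \<Rightarrow> real" where
  "wnorm r n f = (\<Sum>k\<le>n. \<Sum>m\<le>n. cmod (coeff2 f k m) * r ^ (k + m))"

lemma wnorm_nonneg: "0 \<le> r \<Longrightarrow> 0 \<le> wnorm r n f"
  unfolding wnorm_def by (intro sum_nonneg mult_nonneg_nonneg) auto

lemma wnorm_add: "0 \<le> r \<Longrightarrow> wnorm r n (f + g) \<le> wnorm r n f + wnorm r n g"
  unfolding wnorm_def coeff2_add sum.distrib[symmetric] distrib_right[symmetric]
  by (intro sum_mono mult_right_mono norm_triangle_ineq) auto

lemma wnorm_minus: "wnorm r n (- f) = wnorm r n f"
  by (simp add: wnorm_def)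

lemma wnorm_const2_mult: "wnorm r n (const2 c * f) = cmod c * wnorm r n f"
  by (simp add: wnorm_def norm_mult sum_distrib_left mult.assoc)

lemma sum_sum_delta: "(\<Sum>k\<le>(n::nat). \<Sum>m\<le>n. if k = a \<and> m = b then x else 0) = (if a \<le> n \<and> b \<le> n then x else (0::real))"
proof -
  have "(\<Sum>m\<le>n. if k = a \<and> m = b then x else 0) = (if k = a then (if b \<le> n then x else 0) else 0)" for k
    by (cases "k = a") (simp_all add: sum.delta)
  then show ?thesis by (simp add: sum.delta)
qed

lemma wnorm_const2: "wnorm r n (const2 c) = cmod c"
proof -
  have "wnorm r n (const2 c) = (\<Sum>k\<le>n. \<Sum>m\<le>n. if k = 0 \<and> m = 0 then cmod c else 0)"
    unfolding wnorm_def coeff2_const2 by (intro sum.cong refl) auto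
  then show ?thesis by (simp add: sum_sum_delta)
qed

lemma wnorm_Z1: "0 \<le> r \<Longrightarrow> wnorm r n Z1 \<le> r"
proof -
  have "wnorm r n Z1 = (\<Sum>k\<le>n. \<Sum>m\<le>n. if k = 1 \<and> m = 0 then r else 0)"
    unfolding wnorm_def coeff2_Z1 by (intro sum.cong refl) auto
  then show "0 \<le> r \<Longrightarrow> ?thesis" by (simp add: sum_sum_delta)
qed

lemma wnorm_Z2: "0 \<le> r \<Longrightarrow> wnorm r n Z2 \<le> r"
proof -
  have "wnorm r n Z2 = (\<Sum>k\<le>n. \<Sum>m\<le>n. if k = 0 \<and> m = 1 then r else 0)"
    unfolding wnorm_def coeff2_Z2 by (intro sum.cong refl) auto
  then show "0 \<le> r \<Longrightarrow> ?thesis" by (simp add: sum_sum_delta)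
qed

lemma wnorm_scale2:
  assumes "0 \<le> r" "cmod q1 \<le> 1" "cmod q2 \<le> 1"
  shows "wnorm r n (scale2 q1 q2 f) \<le> wnorm r n f"
  unfolding wnorm_def coeff2_scale2
proof (intro sum_mono)
  fix k m
  have "cmod (q1 ^ k * q2 ^ m * coeff2 f k m) = cmod q1 ^ k * cmod q2 ^ m * cmod (coeff2 f k m)"
    by (simp add: norm_mult norm_power)
  also have "\<dots> \<le> 1 * 1 * cmod (coeff2 f k m)"
    using assms by (intro mult_right_mono mult_mono power_le_one) auto
  finally show "cmod (q1 ^ k * q2 ^ m * coeff2 f k m) * r ^ (k + m) \<le> cmod (coeff2 f k m) * r ^ (k + m)"
    using assms by (intro mult_right_mono) auto
qed

lemma sum_convolution_le_mult:
  fixes a b :: "nat \<Rightarrow> real"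
  assumes "\<And>i. 0 \<le> a i" "\<And>i. 0 \<le> b i"
  shows "(\<Sum>k\<le>n. \<Sum>i\<le>k. a i * b (k - i)) \<le> (\<Sum>i\<le>n. a i) * (\<Sum>j\<le>n. b j)"
proof -
  have "(\<Sum>k\<le>n. \<Sum>i\<le>k. a i * b (k - i)) = (\<Sum>(i, j)\<in>{(i, j). i + j \<le> n}. a i * b j)"
    by (rule sum.triangle_reindex_eq[symmetric])
  also have "\<dots> \<le> (\<Sum>(i, j)\<in>{..n} \<times> {..n}. a i * b j)"
    by (rule sum_mono2) (auto intro: mult_nonneg_nonneg assms)
  also have "\<dots> = (\<Sum>i\<le>n. a i) * (\<Sum>j\<le>n. b j)"
    by (simp add: sum_product sum.cartesian_product)
  finally show ?thesis .
qed

lemma wnorm_mult: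
  assumes r: "0 \<le> r"
  shows "wnorm r n (f * g) \<le> wnorm r n f * wnorm r n g"
proof -
  define A where "A i j = cmod (coeff2 f i j) * r ^ (i + j)" for i j
  define B where "B i j = cmod (coeff2 g i j) * r ^ (i + j)" for i j
  have A0: "0 \<le> A i j" and B0: "0 \<le> B i j" for i j using r by (auto simp: A_def B_def)
  have "wnorm r n (f * g) \<le> (\<Sum>k\<le>n. \<Sum>m\<le>n. \<Sum>i\<le>k. \<Sum>j\<le>m. A i j * B (k - i) (m - j))"
    unfolding wnorm_def coeff2_mult
  proof (intro sum_mono)
    fix k m assume "k \<in> {..n}" "m \<in> {..n}"
    have "cmod (\<Sum>i\<le>k. \<Sum>j\<le>m. coeff2 f i j * coeff2 g (k - i) (m - j)) * r ^ (k + m)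
      \<le> (\<Sum>i\<le>k. \<Sum>j\<le>m. cmod (coeff2 f i j) * cmod (coeff2 g (k - i) (m - j))) * r ^ (k + m)"
      using r by (intro mult_right_mono order.trans[OF norm_sum] sum_mono) (auto simp: norm_mult intro!: order.trans[OF norm_sum])
    also have "\<dots> = (\<Sum>i\<le>k. \<Sum>j\<le>m. A i j * B (k - i) (m - j))"
      unfolding sum_distrib_right A_def B_def
      by (intro sum.cong refl) (auto simp: power_add[symmetric] mult_ac)
    finally show "cmod (\<Sum>i\<le>k. \<Sum>j\<le>m. coeff2 f i j * coeff2 g (k - i) (m - j)) * r ^ (k + m)
      \<le> (\<Sum>i\<le>k. \<Sum>j\<le>m. A i j * B (k - i) (m - j))" .
  qed
  also have "\<dots> = (\<Sum>k\<le>n. \<Sum>i\<le>k. \<Sum>m\<le>n. \<Sum>j\<le>m. A i j * B (k - i) (m - j))"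
    by (intro sum.cong refl sum.swap)
  also have "\<dots> \<le> (\<Sum>k\<le>n. \<Sum>i\<le>k. (\<Sum>j\<le>n. A i j) * (\<Sum>j\<le>n. B (k - i) j))"
    by (intro sum_mono sum_convolution_le_mult A0 B0)
  also have "\<dots> \<le> (\<Sum>i\<le>n. \<Sum>j\<le>n. A i j) * (\<Sum>i\<le>n. \<Sum>j\<le>n. B i j)"
    by (rule sum_convolution_le_mult) (auto intro: sum_nonneg A0 B0)
  also have "\<dots> = wnorm r n f * wnorm r n g"
    by (simp add: wnorm_def A_def B_def)
  finally show ?thesis .
qed

lemma coeff2_le_wnorm:
  assumes "0 \<le> r" "k \<le> n" "m \<le> n"
  shows "cmod (coeff2 f k m) * r ^ (k + m) \<le> wnorm r n f"
proof -
  have "cmod (coeff2 f k m) * r ^ (k + m) \<le> (\<Sum>m'\<le>n. cmod (coeff2 f k m') * r ^ (k + m'))"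
    using assms by (intro member_le_sum) auto
  also have "\<dots> \<le> wnorm r n f"
    unfolding wnorm_def using assms
    by (intro member_le_sum[of k "{..n}" "\<lambda>k. \<Sum>m'\<le>n. cmod (coeff2 f k m') * r ^ (k + m')"]) (auto intro!: sum_nonneg)
  finally show ?thesis .
qed

section \<open>Tame maps\<close>

definition shift_comb :: "complex \<Rightarrow> complex \<Rightarrow> complex \<Rightarrow> complex \<Rightarrow> complex \<Rightarrow> ser2 \<Rightarrow> ser2" where
  "shift_comb q1 q2 a0 a1 a2 w = const2 a0 * w + const2 a1 * scale2 q1 q2 w + const2 a2 * scale2 (q1 * q1) (q2 * q2) w"

text \<open>The constants propagate through sums and products, so they can be computed
  for the whole equation by rule application.\<close>

definition tame :: "real \<Rightarrow> complex \<Rightarrow> complex \<Rightarrow> (ser2 \<Rightarrow> ser2) \<Rightarrow> complex \<Rightarrow> real \<Rightarrow> real \<Rightarrow> real \<Rightarrow> real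
   \<Rightarrow> complex \<Rightarrow> complex \<Rightarrow> complex \<Rightarrow> bool" where
  "tame r q1 q2 e c C l s g a0 a1 a2 \<longleftrightarrow>
     cmod c \<le> C \<and> cmod a0 + cmod a1 + cmod a2 \<le> l \<and> 0 \<le> s \<and> 0 \<le> g \<and>
     (\<forall>n. wnorm r n (e 0 - const2 c) \<le> s * r) \<and>
     (\<forall>w n. wnorm r n w \<le> 1 \<longrightarrow>
        wnorm r n (e w - e 0 - shift_comb q1 q2 a0 a1 a2 w) \<le> g * (r * wnorm r n w + (wnorm r n w)^2))"

text \<open>With \<open>W = \<parallel>w\<parallel>\<close>, \<open>X = r W + W\<^sup>2\<close>, the six terms of the expansion are each \<open>O(X)\<close>.\<close>

lemma product_remainder_estimate:
  fixes r W X nS1 nL2 nE1 nR2 nL1 nS2 nR1 nE2 :: real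
  assumes "0 \<le> r" "r \<le> 1" "0 \<le> W" "W \<le> 1" "X = r * W + W^2"
    and "0 \<le> C1" "0 \<le> C2" "0 \<le> l1" "0 \<le> l2" "0 \<le> s1" "0 \<le> s2" "0 \<le> g1" "0 \<le> g2"
    and "0 \<le> nS1" "nS1 \<le> s1 * r" "0 \<le> nS2" "nS2 \<le> s2 * r"
    and "0 \<le> nL1" "nL1 \<le> l1 * W" "0 \<le> nL2" "nL2 \<le> l2 * W"
    and "0 \<le> nR1" "nR1 \<le> g1 * X" "0 \<le> nR2" "nR2 \<le> g2 * X"
    and "0 \<le> nE1" "nE1 \<le> C1 + s1" "0 \<le> nE2" "nE2 \<le> C2 + s2"
  shows "nS1 * nL2 + nE1 * nR2 + nL1 * nS2 + nL1 * nL2 + nL1 * nR2 + nR1 * (nE2 + nL2 + nR2)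
    \<le> (s1 * l2 + (C1 + s1) * g2 + l1 * s2 + l1 * l2 + l1 * g2 + g1 * (C2 + s2 + l2 + 2 * g2)) * X"
proof -
  have X0: "0 \<le> X" and X2: "X \<le> 2" and rW: "r * W \<le> X" and WW: "W * W \<le> X" and WX: "W * X \<le> X"
    using assms(1-5) mult_le_one[of r W] mult_le_one[of W W] mult_left_le_one_le[of X W]
    by (auto simp: power2_eq_square)
  have "nS1 * nL2 \<le> (s1 * r) * (l2 * W)" "nE1 * nR2 \<le> (C1 + s1) * (g2 * X)"
    "nL1 * nS2 \<le> (l1 * W) * (s2 * r)" "nL1 * nL2 \<le> (l1 * W) * (l2 * W)" "nL1 * nR2 \<le> (l1 * W) * (g2 * X)"
    "nR1 * (nE2 + nL2 + nR2) \<le> (g1 * X) * ((C2 + s2) + l2 * W + g2 * X)"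
    using assms by (intro mult_mono add_mono; simp)+
  moreover have "(s1 * r) * (l2 * W) \<le> s1 * l2 * X" "(l1 * W) * (s2 * r) \<le> l1 * s2 * X"
    "(l1 * W) * (l2 * W) \<le> l1 * l2 * X" "(l1 * W) * (g2 * X) \<le> l1 * g2 * X"
    using mult_left_mono[OF rW, of "s1 * l2"] mult_left_mono[OF rW, of "l1 * s2"]
      mult_left_mono[OF WW, of "l1 * l2"] mult_left_mono[OF WX, of "l1 * g2"] assms
    by (simp_all add: mult_ac)
  moreover have "(g1 * X) * ((C2 + s2) + l2 * W + g2 * X) \<le> g1 * X * (C2 + s2 + l2 + 2 * g2)"
    using assms X0 X2 mult_right_le_one_le[of l2 W] mult_left_mono[OF X2, of g2]
    by (intro mult_left_mono) auto
  ultimately show ?thesis by (simp add: algebra_simps)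
qed

locale unit_scaling =
  fixes r :: real and q1 q2 :: complex
  assumes r0: "0 \<le> r" and r1: "r \<le> 1" and q1: "cmod q1 \<le> 1" and q2: "cmod q2 \<le> 1"
begin

lemma wnorm_shift_comb: "wnorm r n (shift_comb q1 q2 a0 a1 a2 w) \<le> (cmod a0 + cmod a1 + cmod a2) * wnorm r n w"
proof -
  have qq: "cmod (q1 * q1) \<le> 1" "cmod (q2 * q2) \<le> 1"
    using q1 q2 by (auto simp: norm_mult intro: mult_le_one)
  have "wnorm r n (shift_comb q1 q2 a0 a1 a2 w) \<le> wnorm r n (const2 a0 * w) + wnorm r n (const2 a1 * scale2 q1 q2 w)
     + wnorm r n (const2 a2 * scale2 (q1 * q1) (q2 * q2) w)"
    unfolding shift_comb_def using r0 by (meson add_mono wnorm_add order_trans order_refl)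
  also have "\<dots> \<le> cmod a0 * wnorm r n w + cmod a1 * wnorm r n w + cmod a2 * wnorm r n w"
    unfolding wnorm_const2_mult
    by (intro add_mono mult_left_mono wnorm_scale2 r0 q1 q2 qq) auto
  finally show ?thesis by (simp add: algebra_simps)
qed

lemma tame_const2: "cmod k \<le> C \<Longrightarrow> tame r q1 q2 (\<lambda>w. const2 k) k C 0 0 0 0 0 0"
  unfolding tame_def shift_comb_def by (simp add: wnorm_def)

lemma tame_one: "tame r q1 q2 (\<lambda>w. 1) 1 1 0 0 0 0 0 0"
  using tame_const2[of 1 1] by simp

lemma tame_Z1: "tame r q1 q2 (\<lambda>w. Z1) 0 0 0 1 0 0 0 0"
  unfolding tame_def shift_comb_def using wnorm_Z1[OF r0] by (simp add: wnorm_def)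

lemma tame_Z2: "tame r q1 q2 (\<lambda>w. Z2) 0 0 0 1 0 0 0 0"
  unfolding tame_def shift_comb_def using wnorm_Z2[OF r0] by (simp add: wnorm_def)

lemma tame_one_plus: "tame r q1 q2 (\<lambda>w. 1 + w) 1 1 1 0 0 1 0 0"
  unfolding tame_def shift_comb_def by (simp add: wnorm_def)

lemma tame_scale2_one_plus: "tame r q1 q2 (\<lambda>w. scale2 q1 q2 (1 + w)) 1 1 1 0 0 0 1 0"
  unfolding tame_def shift_comb_def by (simp add: wnorm_def scale2_add scale2_1)

lemma tame_scale2_sq_one_plus: "tame r q1 q2 (\<lambda>w. scale2 (q1 * q1) (q2 * q2) (1 + w)) 1 1 1 0 0 0 0 1"
  unfolding tame_def shift_comb_def by (simp add: wnorm_def scale2_add scale2_1)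

lemma shift_comb_add: "shift_comb q1 q2 (a0 + b0) (a1 + b1) (a2 + b2) w = shift_comb q1 q2 a0 a1 a2 w + shift_comb q1 q2 b0 b1 b2 w"
  by (simp add: shift_comb_def const2_add algebra_simps)
lemma shift_comb_comb: "shift_comb q1 q2 (c1 * b0 + c2 * a0) (c1 * b1 + c2 * a1) (c1 * b2 + c2 * a2) w
   = const2 c1 * shift_comb q1 q2 b0 b1 b2 w + const2 c2 * shift_comb q1 q2 a0 a1 a2 w"
  by (simp add: shift_comb_def const2_add const2_mult algebra_simps)

lemma tame_add:
  assumes "tame r q1 q2 e1 c1 C1 l1 s1 g1 a0 a1 a2" "tame r q1 q2 e2 c2 C2 l2 s2 g2 b0 b1 b2"
  shows "tame r q1 q2 (\<lambda>w. e1 w + e2 w) (c1 + c2) (C1 + C2) (l1 + l2) (s1 + s2) (g1 + g2)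
     (a0 + b0) (a1 + b1) (a2 + b2)"
  unfolding tame_def
proof (intro conjI allI impI)
  note A = assms[unfolded tame_def]
  show "cmod (c1 + c2) \<le> C1 + C2" using A by (meson add_mono norm_triangle_le)
  show "cmod (a0 + b0) + cmod (a1 + b1) + cmod (a2 + b2) \<le> l1 + l2"
    using A norm_triangle_ineq[of a0 b0] norm_triangle_ineq[of a1 b1] norm_triangle_ineq[of a2 b2] by linarith
  show "0 \<le> s1 + s2" "0 \<le> g1 + g2" using A by auto
  fix n
  have "wnorm r n (e1 0 + e2 0 - const2 (c1 + c2)) \<le> wnorm r n (e1 0 - const2 c1) + wnorm r n (e2 0 - const2 c2)"
    using wnorm_add[OF r0, of n "e1 0 - const2 c1" "e2 0 - const2 c2"] by (simp add: const2_add algebra_simps)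
  also have "\<dots> \<le> s1 * r + s2 * r" using A by (intro add_mono) auto
  finally show "wnorm r n (e1 0 + e2 0 - const2 (c1 + c2)) \<le> (s1 + s2) * r" by (simp add: algebra_simps)
next
  note A = assms[unfolded tame_def]
  fix w n assume w: "wnorm r n w \<le> 1"
  have "wnorm r n (e1 w + e2 w - (e1 0 + e2 0) - shift_comb q1 q2 (a0 + b0) (a1 + b1) (a2 + b2) w)
     \<le> wnorm r n (e1 w - e1 0 - shift_comb q1 q2 a0 a1 a2 w) + wnorm r n (e2 w - e2 0 - shift_comb q1 q2 b0 b1 b2 w)"
    using wnorm_add[OF r0, of n "e1 w - e1 0 - shift_comb q1 q2 a0 a1 a2 w" "e2 w - e2 0 - shift_comb q1 q2 b0 b1 b2 w"]
    by (simp add: shift_comb_add algebra_simps)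
  also have "\<dots> \<le> g1 * (r * wnorm r n w + (wnorm r n w)^2) + g2 * (r * wnorm r n w + (wnorm r n w)^2)"
    using A w by (intro add_mono) auto
  finally show "wnorm r n (e1 w + e2 w - (e1 0 + e2 0) - shift_comb q1 q2 (a0 + b0) (a1 + b1) (a2 + b2) w)
      \<le> (g1 + g2) * (r * wnorm r n w + (wnorm r n w)^2)" by (simp add: algebra_simps)
qed

lemma tame_neg:
  assumes "tame r q1 q2 e c C l s g a0 a1 a2"
  shows "tame r q1 q2 (\<lambda>w. - e w) (- c) C l s g (- a0) (- a1) (- a2)"
proof -
  have L: "shift_comb q1 q2 (- a0) (- a1) (- a2) w = - shift_comb q1 q2 a0 a1 a2 w" for w
    by (simp add: shift_comb_def const2_uminus)
  have m: "- e w - - e 0 - - shift_comb q1 q2 a0 a1 a2 w = - (e w - e 0 - shift_comb q1 q2 a0 a1 a2 w)" for w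
    by simp
  have m2: "- e 0 - const2 (- c) = - (e 0 - const2 c)" by (simp add: const2_def)
  show ?thesis using assms unfolding tame_def L m m2 wnorm_minus by simp
qed

lemma tame_diff:
  assumes "tame r q1 q2 e1 c1 C1 l1 s1 g1 a0 a1 a2" "tame r q1 q2 e2 c2 C2 l2 s2 g2 b0 b1 b2"
  shows "tame r q1 q2 (\<lambda>w. e1 w - e2 w) (c1 - c2) (C1 + C2) (l1 + l2) (s1 + s2) (g1 + g2)
     (a0 - b0) (a1 - b1) (a2 - b2)"
  using tame_add[OF assms(1) tame_neg[OF assms(2)]] by simp

lemma tameD:
  assumes "tame r q1 q2 e c C l s g a0 a1 a2"
  shows "0 \<le> C" "cmod c \<le> C" "0 \<le> l" "0 \<le> s" "0 \<le> g"
    and "wnorm r n (e 0 - const2 c) \<le> s * r" "wnorm r n (e 0 - const2 c) \<le> s"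
    and "wnorm r n (e 0) \<le> C + s"
    and "wnorm r n (shift_comb q1 q2 a0 a1 a2 w) \<le> l * wnorm r n w"
    and "wnorm r n w \<le> 1 \<Longrightarrow>
      wnorm r n (e w - e 0 - shift_comb q1 q2 a0 a1 a2 w) \<le> g * (r * wnorm r n w + (wnorm r n w)^2)"
proof -
  note A = assms[unfolded tame_def]
  show C: "0 \<le> C" "cmod c \<le> C" using A norm_ge_zero[of c] by linarith+
  show l: "0 \<le> l" using A norm_ge_zero[of a0] norm_ge_zero[of a1] norm_ge_zero[of a2] by linarith
  show "0 \<le> s" "0 \<le> g" using A by auto
  show sr: "wnorm r n (e 0 - const2 c) \<le> s * r" using A by auto
  then show s: "wnorm r n (e 0 - const2 c) \<le> s"
    using A r0 r1 mult_left_le[of r s] by linarith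
  have "wnorm r n (e 0) \<le> wnorm r n (const2 c) + wnorm r n (e 0 - const2 c)"
    using wnorm_add[OF r0, of n "const2 c" "e 0 - const2 c"] by simp
  then show "wnorm r n (e 0) \<le> C + s" using C s by (simp add: wnorm_const2)
  show "wnorm r n (shift_comb q1 q2 a0 a1 a2 w) \<le> l * wnorm r n w"
    using wnorm_shift_comb[of n a0 a1 a2 w] mult_right_mono[of _ l "wnorm r n w"] A wnorm_nonneg[OF r0]
    by (meson order_trans)
  show "wnorm r n w \<le> 1 \<Longrightarrow>
      wnorm r n (e w - e 0 - shift_comb q1 q2 a0 a1 a2 w) \<le> g * (r * wnorm r n w + (wnorm r n w)^2)"
    using A by auto
qed

lemma wnorm_product_expansion:
  "wnorm r n (S1 * L2 + E1 * R2 + L1 * S2 + L1 * L2 + L1 * R2 + R1 * (E2 + L2 + R2))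
    \<le> wnorm r n S1 * wnorm r n L2 + wnorm r n E1 * wnorm r n R2 + wnorm r n L1 * wnorm r n S2
      + wnorm r n L1 * wnorm r n L2 + wnorm r n L1 * wnorm r n R2
      + wnorm r n R1 * (wnorm r n E2 + wnorm r n L2 + wnorm r n R2)"
proof -
  have t: "wnorm r n (f + g) \<le> wnorm r n f + wnorm r n g" for f g by (rule wnorm_add[OF r0])
  have m: "wnorm r n (f * g) \<le> wnorm r n f * wnorm r n g" for f g by (rule wnorm_mult[OF r0])
  have "wnorm r n (R1 * (E2 + L2 + R2)) \<le> wnorm r n R1 * (wnorm r n E2 + wnorm r n L2 + wnorm r n R2)"
    using m[of R1 "E2 + L2 + R2"] t[of "E2 + L2" R2] t[of E2 L2]
      mult_left_mono[of _ _ "wnorm r n R1"] wnorm_nonneg[OF r0, of n R1]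
    by (smt (verit, del_insts))
  then show ?thesis
    using t[of "S1 * L2 + E1 * R2 + L1 * S2 + L1 * L2 + L1 * R2" "R1 * (E2 + L2 + R2)"]
      t[of "S1 * L2 + E1 * R2 + L1 * S2 + L1 * L2" "L1 * R2"] t[of "S1 * L2 + E1 * R2 + L1 * S2" "L1 * L2"]
      t[of "S1 * L2 + E1 * R2" "L1 * S2"] t[of "S1 * L2" "E1 * R2"]
      m[of S1 L2] m[of E1 R2] m[of L1 S2] m[of L1 L2] m[of L1 R2]
    by linarith
qed

lemma wnorm_mult_const_part:
  assumes t1: "tame r q1 q2 e1 c1 C1 l1 s1 g1 a0 a1 a2" and t2: "tame r q1 q2 e2 c2 C2 l2 s2 g2 b0 b1 b2"
  shows "wnorm r n (e1 0 * e2 0 - const2 (c1 * c2)) \<le> (C1 * s2 + s1 * C2 + s1 * s2) * r"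
proof -
  note T1 = tameD(1-5)[OF t1] tameD(6-8)[OF t1, where n = n]
    and T2 = tameD(1-5)[OF t2] tameD(6-8)[OF t2, where n = n]
  define S1 S2 where "S1 = e1 0 - const2 c1" and "S2 = e2 0 - const2 c2"
  have "e1 0 * e2 0 - const2 (c1 * c2) = const2 c1 * S2 + const2 c2 * S1 + S1 * S2"
    by (simp add: S1_def S2_def const2_mult algebra_simps)
  then have "wnorm r n (e1 0 * e2 0 - const2 (c1 * c2))
      \<le> cmod c1 * wnorm r n S2 + cmod c2 * wnorm r n S1 + wnorm r n S1 * wnorm r n S2"
    using wnorm_add[OF r0, of n "const2 c1 * S2 + const2 c2 * S1" "S1 * S2"]
      wnorm_add[OF r0, of n "const2 c1 * S2" "const2 c2 * S1"] wnorm_mult[OF r0, of n S1 S2]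
    by (simp add: wnorm_const2_mult)
  also have "\<dots> \<le> C1 * (s2 * r) + C2 * (s1 * r) + (s1 * r) * (s2 * r)"
    using T1 T2 wnorm_nonneg[OF r0] r0 unfolding S1_def S2_def
    by (intro add_mono mult_mono) auto
  also have "\<dots> \<le> (C1 * s2 + s1 * C2 + s1 * s2) * r"
    using mult_left_le_one_le[of "s1 * s2 * r" r] T1 T2 r0 r1 by (simp add: algebra_simps)
  finally show ?thesis .
qed

lemma wnorm_mult_remainder:
  assumes t1: "tame r q1 q2 e1 c1 C1 l1 s1 g1 a0 a1 a2" and t2: "tame r q1 q2 e2 c2 C2 l2 s2 g2 b0 b1 b2"
    and w: "wnorm r n w \<le> 1"
  shows "wnorm r n (e1 w * e2 w - e1 0 * e2 0
      - shift_comb q1 q2 (c1 * b0 + c2 * a0) (c1 * b1 + c2 * a1) (c1 * b2 + c2 * a2) w)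
    \<le> (s1 * l2 + (C1 + s1) * g2 + l1 * s2 + l1 * l2 + l1 * g2 + g1 * (C2 + s2 + l2 + 2 * g2))
      * (r * wnorm r n w + (wnorm r n w)^2)"
proof -
  note T1 = tameD(1-5)[OF t1] tameD(6-8)[OF t1, where n = n] tameD(9,10)[OF t1, where n = n and w = w]
    and T2 = tameD(1-5)[OF t2] tameD(6-8)[OF t2, where n = n] tameD(9,10)[OF t2, where n = n and w = w]
  define L1 L2 where "L1 = shift_comb q1 q2 a0 a1 a2 w" and "L2 = shift_comb q1 q2 b0 b1 b2 w"
  define R1 R2 where "R1 = e1 w - e1 0 - L1" and "R2 = e2 w - e2 0 - L2"
  have "e1 w * e2 w - e1 0 * e2 0 - shift_comb q1 q2 (c1 * b0 + c2 * a0) (c1 * b1 + c2 * a1) (c1 * b2 + c2 * a2) w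
     = (e1 0 - const2 c1) * L2 + e1 0 * R2 + L1 * (e2 0 - const2 c2) + L1 * L2 + L1 * R2 + R1 * (e2 0 + L2 + R2)"
    unfolding shift_comb_comb R1_def R2_def L1_def[symmetric] L2_def[symmetric]
    by (simp add: algebra_simps)
  then have "wnorm r n (e1 w * e2 w - e1 0 * e2 0
      - shift_comb q1 q2 (c1 * b0 + c2 * a0) (c1 * b1 + c2 * a1) (c1 * b2 + c2 * a2) w)
    = wnorm r n ((e1 0 - const2 c1) * L2 + e1 0 * R2 + L1 * (e2 0 - const2 c2) + L1 * L2 + L1 * R2
      + R1 * (e2 0 + L2 + R2))"
    by simp
  also have "\<dots> \<le> (s1 * l2 + (C1 + s1) * g2 + l1 * s2 + l1 * l2 + l1 * g2 + g1 * (C2 + s2 + l2 + 2 * g2))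
      * (r * wnorm r n w + (wnorm r n w)^2)"
    unfolding L1_def L2_def R1_def R2_def
    by (rule order.trans[OF wnorm_product_expansion],
        rule product_remainder_estimate[OF r0 r1 wnorm_nonneg[OF r0] w refl])
       (use T1 T2 w in \<open>simp_all add: wnorm_nonneg r0\<close>)
  finally show ?thesis .
qed

lemma tame_mult:
  assumes t1: "tame r q1 q2 e1 c1 C1 l1 s1 g1 a0 a1 a2" and t2: "tame r q1 q2 e2 c2 C2 l2 s2 g2 b0 b1 b2"
  shows "tame r q1 q2 (\<lambda>w. e1 w * e2 w) (c1 * c2) (C1 * C2) (C1 * l2 + C2 * l1)
     (C1 * s2 + s1 * C2 + s1 * s2)
     (s1 * l2 + (C1 + s1) * g2 + l1 * s2 + l1 * l2 + l1 * g2 + g1 * (C2 + s2 + l2 + 2 * g2))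
     (c1 * b0 + c2 * a0) (c1 * b1 + c2 * a1) (c1 * b2 + c2 * a2)"
  unfolding tame_def
proof (intro conjI allI impI)
  note T1 = tameD[OF t1] and T2 = tameD[OF t2]
  have A: "cmod a0 + cmod a1 + cmod a2 \<le> l1" and B: "cmod b0 + cmod b1 + cmod b2 \<le> l2"
    using t1 t2 by (simp_all add: tame_def)
  show "cmod (c1 * c2) \<le> C1 * C2" using T1 T2 by (simp add: norm_mult mult_mono)
  have "cmod (c1 * b0 + c2 * a0) + cmod (c1 * b1 + c2 * a1) + cmod (c1 * b2 + c2 * a2)
      \<le> cmod c1 * (cmod b0 + cmod b1 + cmod b2) + cmod c2 * (cmod a0 + cmod a1 + cmod a2)"
    using norm_triangle_ineq[of "c1 * b0" "c2 * a0"] norm_triangle_ineq[of "c1 * b1" "c2 * a1"]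
      norm_triangle_ineq[of "c1 * b2" "c2 * a2"] by (simp add: norm_mult algebra_simps)
  also have "\<dots> \<le> C1 * l2 + C2 * l1" using A B T1 T2 by (intro add_mono mult_mono) auto
  finally show "cmod (c1 * b0 + c2 * a0) + cmod (c1 * b1 + c2 * a1) + cmod (c1 * b2 + c2 * a2)
      \<le> C1 * l2 + C2 * l1" .
  show "0 \<le> C1 * s2 + s1 * C2 + s1 * s2"
    and "0 \<le> s1 * l2 + (C1 + s1) * g2 + l1 * s2 + l1 * l2 + l1 * g2 + g1 * (C2 + s2 + l2 + 2 * g2)"
    using T1 T2 by auto
next
  fix n
  show "wnorm r n (e1 0 * e2 0 - const2 (c1 * c2)) \<le> (C1 * s2 + s1 * C2 + s1 * s2) * r"
    by (rule wnorm_mult_const_part[OF t1 t2])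
next
  fix w n assume "wnorm r n w \<le> 1"
  then show "wnorm r n (e1 w * e2 w - e1 0 * e2 0 - shift_comb q1 q2 (c1 * b0 + c2 * a0) (c1 * b1 + c2 * a1)
      (c1 * b2 + c2 * a2) w) \<le> (s1 * l2 + (C1 + s1) * g2 + l1 * s2 + l1 * l2 + l1 * g2 + g1 * (C2 + s2 + l2 + 2 * g2))
      * (r * wnorm r n w + (wnorm r n w)^2)"
    by (rule wnorm_mult_remainder[OF t1 t2])
qed
end

section \<open>The rescaled equation\<close>

text \<open>\<open>qPA1_ser\<close> after the substitution \<open>\<zeta> \<mapsto> q \<zeta>\<close> (lemma \<open>scale2_qPA1_ser\<close>), arranged so that
  \<open>v\<close> enters only through \<open>v\<close>, \<open>v(q \<zeta>)\<close> and \<open>v(q\<^sup>2 \<zeta>)\<close>: all shifts are then contractions when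
  \<open>|q\<^sub>1|, |q\<^sub>2| \<le> 1\<close>, and the linear part at \<open>v = 1\<close> is \<open>w - 2 w(q \<zeta>) + w(q\<^sup>2 \<zeta>)\<close>.\<close>

definition qPA1_ser_scaled :: "complex \<Rightarrow> complex \<Rightarrow> complex \<Rightarrow> complex \<Rightarrow> complex \<Rightarrow> complex \<Rightarrow> complex \<Rightarrow> ser2 \<Rightarrow> ser2" where
  "qPA1_ser_scaled q1 q2 s a b c d v =
    (const2 q1 * scale2 q1 q2 v * scale2 (q1 * q1) (q2 * q2) v - const2 s * const2 q2 * const2 q2 * (Z2 * Z2)) *
    (const2 (inverse q1) * scale2 q1 q2 v * v - const2 (inverse s) * const2 q2 * const2 q2 * (Z2 * Z2)) *
    (const2 q1 * Z1 * scale2 q1 q2 v - const2 c) * (const2 q1 * Z1 * scale2 q1 q2 v - const2 (inverse c)) *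
    (const2 q1 * Z1 * scale2 q1 q2 v - const2 d) * (const2 q1 * Z1 * scale2 q1 q2 v - const2 (inverse d))
    - (const2 q1 * const2 q1 * const2 q1 * (Z1 * Z1) * scale2 q1 q2 v * scale2 (q1 * q1) (q2 * q2) v - 1) *
      (const2 (inverse q1) * const2 q1 * const2 q1 * (Z1 * Z1) * scale2 q1 q2 v * v - 1) *
      (scale2 q1 q2 v - const2 a * const2 q2 * Z2) * (scale2 q1 q2 v - const2 (inverse a) * const2 q2 * Z2) *
      (scale2 q1 q2 v - const2 b * const2 q2 * Z2) * (scale2 q1 q2 v - const2 (inverse b) * const2 q2 * Z2)"

lemma scale2_qPA1_ser:
  assumes "l \<noteq> 0" "s \<noteq> 0"
  shows "scale2 (s * l) (inverse l) (qPA1_ser l s a b c d v) = qPA1_ser_scaled (s * l) (inverse l) s a b c d v"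
proof -
  define q1 where "q1 = s * l"
  have i: "scale2 q1 (inverse l) (scale2 (inverse q1) l v) = v"
  proof -
    have "q1 \<noteq> 0" using assms by (simp add: q1_def)
    then have "q1 * inverse q1 = 1" by simp
    moreover have "inverse l * l = 1" using assms by simp
    ultimately show ?thesis by (simp add: scale2_scale2 scale2_1_1)
  qed
  have ii: "scale2 q1 (inverse l) (scale2 q1 (inverse l) v) = scale2 (q1 * q1) (inverse l * inverse l) v"
    by (simp add: scale2_scale2)
  show ?thesis
    unfolding qPA1_ser_def qPA1_ser_scaled_def q1_def[symmetric]
    by (simp only: scale2_mult scale2_diff scale2_const2 scale2_Z1 scale2_Z2 scale2_power scale2_1 i ii)
       (simp add: power2_eq_square mult_ac)
qed

schematic_goal (in unit_scaling) qPA1_ser_scaled_tame_schematic: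
  assumes "cmod q1 \<le> M" "cmod (inverse q1) \<le> M" "cmod q2 \<le> M" "cmod s \<le> M" "cmod (inverse s) \<le> M"
    "cmod a \<le> M" "cmod (inverse a) \<le> M" "cmod b \<le> M" "cmod (inverse b) \<le> M"
    "cmod c \<le> M" "cmod (inverse c) \<le> M" "cmod d \<le> M" "cmod (inverse d) \<le> M"
  shows "tame r q1 q2 (\<lambda>w.
    (const2 q1 * scale2 q1 q2 (1 + w) * scale2 (q1 * q1) (q2 * q2) (1 + w) - const2 s * const2 q2 * const2 q2 * (Z2 * Z2)) *
    (const2 (inverse q1) * scale2 q1 q2 (1 + w) * (1 + w) - const2 (inverse s) * const2 q2 * const2 q2 * (Z2 * Z2)) *
    (const2 q1 * Z1 * scale2 q1 q2 (1 + w) - const2 c) * (const2 q1 * Z1 * scale2 q1 q2 (1 + w) - const2 (inverse c)) *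
    (const2 q1 * Z1 * scale2 q1 q2 (1 + w) - const2 d) * (const2 q1 * Z1 * scale2 q1 q2 (1 + w) - const2 (inverse d))
    - (const2 q1 * const2 q1 * const2 q1 * (Z1 * Z1) * scale2 q1 q2 (1 + w) * scale2 (q1 * q1) (q2 * q2) (1 + w) - 1) *
      (const2 (inverse q1) * const2 q1 * const2 q1 * (Z1 * Z1) * scale2 q1 q2 (1 + w) * (1 + w) - 1) *
      (scale2 q1 q2 (1 + w) - const2 a * const2 q2 * Z2) * (scale2 q1 q2 (1 + w) - const2 (inverse a) * const2 q2 * Z2) *
      (scale2 q1 q2 (1 + w) - const2 b * const2 q2 * Z2) * (scale2 q1 q2 (1 + w) - const2 (inverse b) * const2 q2 * Z2))
    ?c ?C ?L ?S ?G ?a0 ?a1 ?a2"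
  by (rule tame_one_plus tame_scale2_one_plus tame_scale2_sq_one_plus tame_one tame_Z1 tame_Z2 tame_const2
      tame_mult tame_diff tame_add assms)+

lemma tame_eqI: "tame r q1 q2 e c C L S G a0 a1 a2 \<Longrightarrow> c = c' \<Longrightarrow> a0 = a0' \<Longrightarrow> a1 = a1' \<Longrightarrow> a2 = a2'
  \<Longrightarrow> tame r q1 q2 e c' C L S G a0' a1' a2'"
  by simp

text \<open>The constants found by the schematic lemma are expressions in \<open>M\<close> alone, so they can be
  chosen before \<open>r\<close>, the shifts and the parameters.\<close>

lemma qPA1_ser_scaled_tame:
  "\<exists>C L S G. \<forall>r q1 q2 s a b c d. 0 \<le> r \<and> r \<le> 1 \<and> cmod q1 \<le> 1 \<and> cmod q2 \<le> 1 \<and>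
     q1 \<noteq> 0 \<and> c \<noteq> 0 \<and> d \<noteq> 0 \<and>
     cmod q1 \<le> M \<and> cmod (inverse q1) \<le> M \<and> cmod q2 \<le> M \<and> cmod s \<le> M \<and> cmod (inverse s) \<le> M \<and>
     cmod a \<le> M \<and> cmod (inverse a) \<le> M \<and> cmod b \<le> M \<and> cmod (inverse b) \<le> M \<and>
     cmod c \<le> M \<and> cmod (inverse c) \<le> M \<and> cmod d \<le> M \<and> cmod (inverse d) \<le> M \<longrightarrow>
     tame r q1 q2 (\<lambda>w. qPA1_ser_scaled q1 q2 s a b c d (1 + w)) 0 C L S G 1 (- 2) 1"
  unfolding qPA1_ser_scaled_def
  by (intro exI allI impI, elim conjE, rule tame_eqI[OF unit_scaling.qPA1_ser_scaled_tame_schematic])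
     (simp_all add: unit_scaling_def field_simps)

lemma coeff2_shift_comb: "coeff2 (shift_comb q1 q2 a0 a1 a2 w) k m =
   (a0 + a1 * (q1 ^ k * q2 ^ m) + a2 * (q1 ^ k * q2 ^ m)^2) * coeff2 w k m"
  unfolding shift_comb_def coeff2_add coeff2_const2_mult coeff2_scale2 by (simp add: power_mult_distrib power2_eq_square algebra_simps)

definition qPA1_remainder ::
    "complex \<Rightarrow> complex \<Rightarrow> complex \<Rightarrow> complex \<Rightarrow> complex \<Rightarrow> complex \<Rightarrow> complex \<Rightarrow> ser2 \<Rightarrow> ser2" where
  "qPA1_remainder q1 q2 s a b c d t = qPA1_ser_scaled q1 q2 s a b c d (1 + t) - qPA1_ser_scaled q1 q2 s a b c d 1 - shift_comb q1 q2 1 (- 2) 1 t"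

lemma coeff2_qPA1_ser_scaled:
  assumes "l \<noteq> 0" "s \<noteq> 0"
  shows "coeff2 (qPA1_ser_scaled (s * l) (inverse l) s a b c d v) k m = ((s * l) ^ k * (inverse l) ^ m) * coeff2 (qPA1_ser l s a b c d v) k m"
  using scale2_qPA1_ser[OF assms, of a b c d v, symmetric] by simp

lemma qPA1_remainder_coeff2_cong:
  assumes nz: "l \<noteq> 0" "s \<noteq> 0" "c \<noteq> 0" "d \<noteq> 0" and km: "(k, m) \<noteq> (0, 0)"
    and t0: "coeff2 t 0 0 = 0"
    and ag: "\<And>i j. i \<le> k \<Longrightarrow> j \<le> m \<Longrightarrow> (i, j) \<noteq> (k, m) \<Longrightarrow> coeff2 t i j = coeff2 t' i j"
  shows "coeff2 (qPA1_remainder (s * l) (inverse l) s a b c d t) k m = coeff2 (qPA1_remainder (s * l) (inverse l) s a b c d t') k m"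
proof -
  define Q where "Q = (s * l) ^ k * (inverse l) ^ m"
  have box_perturb: "box_perturb k m (1 + t) (1 + t') (coeff2 t k m - coeff2 t' k m)"
    unfolding box_perturb_def box_agree_def
  proof (intro allI impI)
    fix i j assume "i \<le> k" "j \<le> m"
    then show "coeff2 (1 + t) i j = coeff2 (1 + t' + const2 (coeff2 t k m - coeff2 t' k m) * mono2 k m) i j"
      using ag[of i j] by (cases "(i, j) = (k, m)") auto
  qed
  have g: "coeff2 (qPA1_ser l s a b c d (1 + t)) k m = coeff2 (qPA1_ser l s a b c d (1 + t')) k m + (coeff2 t k m - coeff2 t' k m) * diag_coeff l s k m"
    by (rule coeff2_qPA1_ser_perturb[OF km box_perturb]) (use t0 nz ag[of 0 0] km in \<open>auto simp: coeff2_one\<close>)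
  have Q0: "Q \<noteq> 0" using nz by (simp add: Q_def)
  have Lq: "diag_coeff l s k m = (1 - 2 * Q + Q^2) / Q"
    using Q0 unfolding diag_coeff_def Q_def[symmetric] by (simp add: field_simps power2_eq_square)
  show ?thesis
    unfolding qPA1_remainder_def coeff2_diff coeff2_shift_comb coeff2_qPA1_ser_scaled[OF nz(1,2)] Q_def[symmetric] g Lq
    using Q0 by (simp add: field_simps)
qed

lemma coeff2_approx_sol_top_scaled:
  assumes nz: "l \<noteq> 0" "s \<noteq> 0" and L: "diag_coeff l s k m \<noteq> 0" and D: "k + m = Suc D"
  shows "(((s * l) ^ k * (inverse l) ^ m) - 1)^2 * coeff2 (approx_sol l s a b c d (Suc D)) k m =
     - coeff2 (qPA1_ser_scaled (s * l) (inverse l) s a b c d (approx_sol l s a b c d D)) k m"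
proof -
  define Q where "Q = (s * l) ^ k * (inverse l) ^ m"
  have Q0: "Q \<noteq> 0" using nz by (simp add: Q_def)
  have QL: "(Q - 1)^2 = Q * diag_coeff l s k m"
    using Q0 unfolding diag_coeff_def Q_def[symmetric] by (simp add: field_simps power2_eq_square)
  show ?thesis
    unfolding coeff2_approx_sol_top[OF D] coeff2_qPA1_ser_scaled[OF nz] Q_def[symmetric] QL using L by simp
qed

section \<open>A uniform bound on the coefficients\<close>

lemma norm_power_mult_power_le:
  assumes "0 \<le> \<rho>" "\<rho> \<le> 1" "cmod q1 \<le> \<rho>" "cmod q2 \<le> \<rho>" "(k, m) \<noteq> (0, 0)"
  shows "cmod (q1 ^ k * q2 ^ m) \<le> \<rho>"
proof -
  have "cmod (q1 ^ k * q2 ^ m) = cmod q1 ^ k * cmod q2 ^ m" by (simp add: norm_mult norm_power)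
  also have "\<dots> \<le> \<rho> ^ k * \<rho> ^ m" using assms by (intro mult_mono power_mono) auto
  also have "\<dots> = \<rho> ^ (k + m)" by (simp add: power_add)
  also have "\<dots> \<le> \<rho>" using power_decreasing[of 1 "k + m" \<rho>] assms by auto
  finally show ?thesis .
qed

text \<open>Write \<open>approx_sol = 1 + T\<close>. At a new coefficient \<open>(k, m)\<close> the recursion reads
  \<open>(Q - 1)\<^sup>2 T\<^sub>k\<^sub>m = - (G(1) + R(T))\<^sub>k\<^sub>m\<close>, where \<open>G\<close> is the scaled equation, \<open>R\<close> its nonlinear remainder,
  \<open>Q = q\<^sub>1\<^sup>k q\<^sub>2\<^sup>m\<close>, and \<open>|Q| \<le> \<rho> < 1\<close> keeps \<open>(Q - 1)\<^sup>2\<close> away from \<open>0\<close>.\<close>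

lemma coeff2_approx_sol_deviation_le:
  assumes nz: "l \<noteq> 0" "s \<noteq> 0" "c \<noteq> 0" "d \<noteq> 0"
    and \<rho>: "0 \<le> \<rho>" "\<rho> < 1" "cmod (s * l) \<le> \<rho>" "cmod (inverse l) \<le> \<rho>"
  shows "(1 - \<rho>)^2 * cmod (coeff2 (approx_sol l s a b c d (Suc D) - 1) k m)
    \<le> cmod (coeff2 (qPA1_ser_scaled (s * l) (inverse l) s a b c d 1) k m)
      + cmod (coeff2 (qPA1_remainder (s * l) (inverse l) s a b c d (approx_sol l s a b c d D - 1)) k m)"
proof (cases "(k, m) = (0, 0) \<or> Suc D < k + m")
  case True
  then have "coeff2 (approx_sol l s a b c d (Suc D) - 1) k m = 0"
    by (auto simp: coeff2_approx_sol_eq_0 coeff2_one simp del: approx_sol.simps)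
  then show ?thesis by simp
next
  case False
  then have km: "(k, m) \<noteq> (0, 0)" and le: "k + m \<le> Suc D" by auto
  then obtain J where J: "k + m = Suc J" by (cases "k + m") auto
  define Q where "Q = (s * l) ^ k * inverse l ^ m"
  let ?G = "qPA1_ser_scaled (s * l) (inverse l) s a b c d"
  let ?R = "qPA1_remainder (s * l) (inverse l) s a b c d"
  let ?T = "\<lambda>D. approx_sol l s a b c d D - 1"
  have "cmod Q \<le> \<rho>" unfolding Q_def using \<rho> km by (intro norm_power_mult_power_le) auto
  then have Q1: "(1 - \<rho>)^2 \<le> cmod ((Q - 1)^2)" and "Q \<noteq> 1"
    using \<rho> norm_triangle_ineq2[of 1 Q] by (auto simp: norm_minus_commute norm_power intro!: power_mono)
  then have "diag_coeff l s k m \<noteq> 0" using nz by (simp add: diag_coeff_eq Q_def)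
  then have top: "(Q - 1)^2 * coeff2 (approx_sol l s a b c d (Suc J)) k m
      = - coeff2 (?G (approx_sol l s a b c d J)) k m"
    unfolding Q_def using coeff2_approx_sol_top_scaled[OF nz(1,2) _ J] by blast
  have "coeff2 (approx_sol l s a b c d J) i j = coeff2 (approx_sol l s a b c d D) i j" if "i + j \<le> J" for i j
    using coeff2_approx_sol_stable[of J D i j] that J le by simp
  then have rem: "coeff2 (?R (?T J)) k m = coeff2 (?R (?T D)) k m"
    using J by (intro qPA1_remainder_coeff2_cong[OF nz km]) (auto simp: coeff2_one simp del: approx_sol.simps)
  have "coeff2 (?G (approx_sol l s a b c d J)) k m
      = coeff2 (?G 1) k m + coeff2 (shift_comb (s * l) (inverse l) 1 (- 2) 1 (?T J)) k m + coeff2 (?R (?T J)) k m"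
    by (simp add: qPA1_remainder_def)
  also have "coeff2 (shift_comb (s * l) (inverse l) 1 (- 2) 1 (?T J)) k m = 0"
    using J km by (simp add: coeff2_shift_comb coeff2_approx_sol_eq_0 coeff2_one del: approx_sol.simps)
  finally have "coeff2 (?G (approx_sol l s a b c d J)) k m = coeff2 (?G 1) k m + coeff2 (?R (?T D)) k m"
    using rem by simp
  moreover have "coeff2 (?T (Suc D)) k m = coeff2 (approx_sol l s a b c d (Suc J)) k m"
    using J le km coeff2_approx_sol_stable[of "Suc J" "Suc D" k m] by (simp add: coeff2_one del: approx_sol.simps)
  ultimately have "(Q - 1)^2 * coeff2 (?T (Suc D)) k m = - (coeff2 (?G 1) k m + coeff2 (?R (?T D)) k m)"
    using top by (simp del: approx_sol.simps)
  then have "cmod ((Q - 1)^2) * cmod (coeff2 (?T (Suc D)) k m)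
      = cmod (coeff2 (?G 1) k m + coeff2 (?R (?T D)) k m)"
    by (metis norm_minus_cancel norm_mult)
  also have "\<dots> \<le> cmod (coeff2 (?G 1) k m) + cmod (coeff2 (?R (?T D)) k m)"
    by (rule norm_triangle_ineq)
  finally show ?thesis
    by (rule order.trans[OF mult_right_mono[OF Q1 norm_ge_zero]])
qed

lemma wnorm_approx_sol_deviation_le:
  assumes nz: "l \<noteq> 0" "s \<noteq> 0" "c \<noteq> 0" "d \<noteq> 0"
    and \<rho>: "0 \<le> \<rho>" "\<rho> < 1" "cmod (s * l) \<le> \<rho>" "cmod (inverse l) \<le> \<rho>"
    and r: "0 \<le> r" and \<delta>: "0 \<le> \<delta>" "\<delta> \<le> 1" and SG: "0 \<le> S" "0 \<le> G"
    and const: "\<And>n. wnorm r n (qPA1_ser_scaled (s * l) (inverse l) s a b c d 1) \<le> S * r"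
    and rem: "\<And>w n. wnorm r n w \<le> 1 \<Longrightarrow>
      wnorm r n (qPA1_remainder (s * l) (inverse l) s a b c d w) \<le> G * (r * wnorm r n w + (wnorm r n w)^2)"
    and small: "S * r + G * (r * \<delta> + \<delta>^2) \<le> (1 - \<rho>)^2 * \<delta>"
  shows "wnorm r n (approx_sol l s a b c d D - 1) \<le> \<delta>"
proof (induction D arbitrary: n)
  case 0
  then show ?case using \<delta> by (simp add: wnorm_def)
next
  case (Suc D)
  let ?G = "qPA1_ser_scaled (s * l) (inverse l) s a b c d"
  let ?R = "qPA1_remainder (s * l) (inverse l) s a b c d"
  define X where "X = wnorm r n (approx_sol l s a b c d D - 1)"
  have X: "0 \<le> X" "X \<le> \<delta>" using Suc.IH wnorm_nonneg[OF r] by (auto simp: X_def)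
  have K: "0 < (1 - \<rho>)^2" using \<rho> by simp
  have "(1 - \<rho>)^2 * wnorm r n (approx_sol l s a b c d (Suc D) - 1)
      \<le> wnorm r n (?G 1) + wnorm r n (?R (approx_sol l s a b c d D - 1))"
    unfolding wnorm_def sum_distrib_left sum.distrib[symmetric] mult.assoc[symmetric] distrib_right[symmetric]
    using r by (intro sum_mono mult_right_mono coeff2_approx_sol_deviation_le[OF nz \<rho>]) auto
  also have "\<dots> \<le> S * r + G * (r * X + X^2)"
    using const rem X \<delta> by (intro add_mono) (auto simp: X_def)
  also have "\<dots> \<le> S * r + G * (r * \<delta> + \<delta>^2)"
    using X r SG by (intro add_mono mult_left_mono power_mono) auto
  finally have "(1 - \<rho>)^2 * wnorm r n (approx_sol l s a b c d (Suc D) - 1) \<le> (1 - \<rho>)^2 * \<delta>"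
    using small by linarith
  then show ?case using K by (simp add: mult_le_cancel_left_pos del: approx_sol.simps)
qed

lemma mult_le_quarter:
  fixes G x K :: real
  assumes "0 \<le> G" "0 \<le> x" "x \<le> K / (4 * (G + 1))" "0 < K"
  shows "G * x \<le> K / 4"
proof -
  have "G * x \<le> (G + 1) * x" using assms by (simp add: mult_right_mono)
  also have "\<dots> \<le> (G + 1) * (K / (4 * (G + 1)))" using assms by (intro mult_left_mono) auto
  also have "\<dots> = K / 4" using assms by (simp add: field_simps)
  finally show ?thesis .
qed

lemma small_radius_choice:
  fixes K S G :: real
  assumes K: "0 < K" and S: "0 \<le> S" and G: "0 \<le> G"
  defines "\<delta> \<equiv> min 1 (K / (4 * (G + 1)))"
  defines "r \<equiv> min 1 (min (K * \<delta> / (4 * (S + 1))) (K / (4 * (G + 1))))"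
  shows "0 < \<delta>" "\<delta> \<le> 1" "0 < r" "r \<le> 1" "S * r + G * (r * \<delta> + \<delta>^2) \<le> K * \<delta>"
proof -
  show d0: "0 < \<delta>" using assms by (simp add: \<delta>_def)
  show "\<delta> \<le> 1" by (simp add: \<delta>_def)
  show r0: "0 < r" using assms d0 by (simp add: r_def)
  show "r \<le> 1" by (simp add: r_def)
  have a: "G * \<delta> \<le> K / 4" using mult_le_quarter[OF G _ _ K] d0 by (simp add: \<delta>_def)
  have b: "G * r \<le> K / 4" using mult_le_quarter[OF G _ _ K] r0 by (simp add: r_def)
  have c: "S * r \<le> K * \<delta> / 4" using mult_le_quarter[of S r "K * \<delta>"] S r0 d0 K by (simp add: r_def)
  have "G * (r * \<delta> + \<delta>^2) = (G * r) * \<delta> + (G * \<delta>) * \<delta>" by (simp add: algebra_simps power2_eq_square)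
  also have "\<dots> \<le> (K / 4) * \<delta> + (K / 4) * \<delta>"
    using a b d0 by (intro add_mono mult_right_mono) auto
  finally have "G * (r * \<delta> + \<delta>^2) \<le> K * \<delta> / 2" by simp
  then show "S * r + G * (r * \<delta> + \<delta>^2) \<le> K * \<delta>" using c mult_pos_pos[OF K d0] by linarith
qed

text \<open>The bound holds uniformly as long as \<open>|q\<^sub>1|, |q\<^sub>2| \<le> \<rho> < 1\<close> and the parameters and
  their inverses are bounded, because the constants of \<open>qPA1_ser_scaled_tame\<close> depend only on that bound.\<close>

theorem formal_sol_coeff_bound:
  fixes s a b c d :: complex and \<rho> M :: real
  assumes \<rho>: "0 \<le> \<rho>" "\<rho> < 1" and M: "1 \<le> M"
    and nz: "s \<noteq> 0" "c \<noteq> 0" "d \<noteq> 0"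
    and bounded: "cmod s \<le> M" "cmod (inverse s) \<le> M" "cmod a \<le> M" "cmod (inverse a) \<le> M"
      "cmod b \<le> M" "cmod (inverse b) \<le> M" "cmod c \<le> M" "cmod (inverse c) \<le> M"
      "cmod d \<le> M" "cmod (inverse d) \<le> M"
  obtains r where "0 < r" "r \<le> 1"
    "\<And>l k m. l \<noteq> 0 \<Longrightarrow> cmod (s * l) \<le> \<rho> \<Longrightarrow> cmod (inverse l) \<le> \<rho> \<Longrightarrow> cmod (inverse (s * l)) \<le> M \<Longrightarrow>
      cmod (coeff2 (formal_sol l s a b c d) k m) \<le> 2 / r ^ (k + m)"
proof -
  obtain C L S G where tame: "\<forall>r q1 q2 s a b c d. 0 \<le> r \<and> r \<le> 1 \<and> cmod q1 \<le> 1 \<and> cmod q2 \<le> 1 \<and>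
     q1 \<noteq> 0 \<and> c \<noteq> 0 \<and> d \<noteq> 0 \<and>
     cmod q1 \<le> M \<and> cmod (inverse q1) \<le> M \<and> cmod q2 \<le> M \<and> cmod s \<le> M \<and> cmod (inverse s) \<le> M \<and>
     cmod a \<le> M \<and> cmod (inverse a) \<le> M \<and> cmod b \<le> M \<and> cmod (inverse b) \<le> M \<and>
     cmod c \<le> M \<and> cmod (inverse c) \<le> M \<and> cmod d \<le> M \<and> cmod (inverse d) \<le> M \<longrightarrow>
     tame r q1 q2 (\<lambda>w. qPA1_ser_scaled q1 q2 s a b c d (1 + w)) 0 C L S G 1 (- 2) 1"
    using qPA1_ser_scaled_tame[of M] by blast
  define K where "K = (1 - \<rho>)^2"
  have K: "0 < K" using \<rho> by (simp add: K_def)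
  define \<delta> where "\<delta> = min 1 (K / (4 * (\<bar>G\<bar> + 1)))"
  define r where "r = min 1 (min (K * \<delta> / (4 * (\<bar>S\<bar> + 1))) (K / (4 * (\<bar>G\<bar> + 1))))"
  note choice = small_radius_choice[OF K abs_ge_zero[of S] abs_ge_zero[of G], folded \<delta>_def, folded r_def]
  show ?thesis
  proof (rule that[of r])
    show r: "0 < r" "r \<le> 1" using choice(3,4) by simp_all
    fix l k m assume l: "l \<noteq> 0" "cmod (s * l) \<le> \<rho>" "cmod (inverse l) \<le> \<rho>" "cmod (inverse (s * l)) \<le> M"
    have "tame r (s * l) (inverse l) (\<lambda>w. qPA1_ser_scaled (s * l) (inverse l) s a b c d (1 + w)) 0 C L S G 1 (- 2) 1"
      by (intro tame[rule_format] conjI) (use l \<rho> r M bounded nz in auto)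
    then have "0 \<le> S" "0 \<le> G"
      and "wnorm r n (qPA1_ser_scaled (s * l) (inverse l) s a b c d 1) \<le> S * r"
      and "wnorm r n w \<le> 1 \<Longrightarrow> wnorm r n (qPA1_remainder (s * l) (inverse l) s a b c d w)
        \<le> G * (r * wnorm r n w + (wnorm r n w)^2)" for n w
      unfolding tame_def qPA1_remainder_def by simp_all
    then have "wnorm r (k + m) (approx_sol l s a b c d (k + m) - 1) \<le> \<delta>"
      using l nz \<rho> r choice by (intro wnorm_approx_sol_deviation_le) (auto simp: K_def)
    then have "cmod (coeff2 (approx_sol l s a b c d (k + m) - 1) k m) * r ^ (k + m) \<le> 1"
      using coeff2_le_wnorm[of r k "k + m" m "approx_sol l s a b c d (k + m) - 1"] r choice by linarith
    then have "cmod (coeff2 (approx_sol l s a b c d (k + m) - 1) k m) \<le> 1 / r ^ (k + m)"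
      using r by (simp add: pos_le_divide_eq)
    moreover have "coeff2 (formal_sol l s a b c d) k m = coeff2 (approx_sol l s a b c d (k + m) - 1) k m + coeff2 1 k m"
      by (simp add: formal_sol_def)
    moreover have "cmod (coeff2 1 k m) \<le> 1" by (simp add: coeff2_one)
    ultimately have "cmod (coeff2 (formal_sol l s a b c d) k m) \<le> 1 / r ^ (k + m) + 1"
      by (metis add_mono norm_triangle_ineq order_trans)
    also have "\<dots> \<le> 2 / r ^ (k + m)"
      using r power_le_one[of r "k + m"] by (simp add: field_simps)
    finally show "cmod (coeff2 (formal_sol l s a b c d) k m) \<le> 2 / r ^ (k + m)" .
  qed
qed

section \<open>Double power series\<close>

lemma geometric_tail_bound:
  fixes f :: "nat \<Rightarrow> complex" and C \<theta> :: real
  assumes b: "\<And>n. cmod (f n) \<le> C * \<theta> ^ n" and t0: "0 \<le> \<theta>" and t1: "\<theta> < 1"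
  shows "summable f" "cmod (suminf f - (\<Sum>i<k. f i)) \<le> C * \<theta> ^ k / (1 - \<theta>)"
proof -
  have sg: "summable (\<lambda>n. C * \<theta> ^ n)" using t0 t1 by (intro summable_mult summable_geometric) auto
  show sf: "summable f" by (rule summable_comparison_test'[OF sg b])
  have sg': "summable (\<lambda>n. C * \<theta> ^ k * \<theta> ^ n)" using t0 t1 by (intro summable_mult summable_geometric) auto
  have bk: "cmod (f (n + k)) \<le> C * \<theta> ^ k * \<theta> ^ n" for n
    using b[of "n + k"] by (simp add: power_add mult_ac)
  have sk: "summable (\<lambda>n. cmod (f (n + k)))"
    by (rule summable_comparison_test'[OF sg']) (use bk in auto)
  have "suminf f - (\<Sum>i<k. f i) = (\<Sum>n. f (n + k))"
    using suminf_split_initial_segment[OF sf, of k] by simp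
  also have "cmod \<dots> \<le> (\<Sum>n. cmod (f (n + k)))" by (rule summable_norm[OF sk])
  also have "\<dots> \<le> (\<Sum>n. C * \<theta> ^ k * \<theta> ^ n)" by (rule suminf_le[OF bk sk sg'])
  also have "\<dots> = C * \<theta> ^ k * (1 / (1 - \<theta>))"
    using t0 t1 by (simp add: suminf_mult suminf_geometric)
  finally show "cmod (suminf f - (\<Sum>i<k. f i)) \<le> C * \<theta> ^ k / (1 - \<theta>)" by simp
qed

lemma double_sum_tail_bound:
  fixes a :: "nat \<Rightarrow> nat \<Rightarrow> complex" and B \<theta> :: real
  assumes b: "\<And>n m. cmod (a n m) \<le> B * \<theta> ^ (n + m)" and t0: "0 \<le> \<theta>" and t1: "\<theta> < 1"
  shows "cmod ((\<Sum>n\<le>N. \<Sum>m\<le>M. a n m) - (\<Sum>n. \<Sum>m. a n m)) \<le> B / (1 - \<theta>)^2 * (\<theta> ^ Suc N + \<theta> ^ Suc M)"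
proof -
  have B0: "0 \<le> B" using b[of 0 0] by (metis norm_ge_zero order_trans power_0 mult_1_right add_0)
  define g where "g n = (\<Sum>m. a n m)" for n
  have bn: "cmod (a n m) \<le> (B * \<theta> ^ n) * \<theta> ^ m" for n m using b[of n m] by (simp add: power_add mult_ac)
  have gt: "cmod (g n - (\<Sum>m<k. a n m)) \<le> B * \<theta> ^ n * \<theta> ^ k / (1 - \<theta>)" for n k
    unfolding g_def by (rule geometric_tail_bound(2)[OF bn t0 t1])
  have gb: "cmod (g n) \<le> (B / (1 - \<theta>)) * \<theta> ^ n" for n
    using gt[of n 0] by simp
  have gtail: "cmod ((\<Sum>n. g n) - (\<Sum>n<k. g n)) \<le> (B / (1 - \<theta>)) * \<theta> ^ k / (1 - \<theta>)" for k
    by (rule geometric_tail_bound(2)[OF gb t0 t1])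
  have "(\<Sum>n\<le>N. \<Sum>m\<le>M. a n m) - (\<Sum>n. \<Sum>m. a n m)
      = (\<Sum>n<Suc N. ((\<Sum>m<Suc M. a n m) - g n)) + ((\<Sum>n<Suc N. g n) - (\<Sum>n. g n))"
    by (simp add: g_def lessThan_Suc_atMost sum_subtractf)
  also have "cmod \<dots> \<le> (\<Sum>n<Suc N. cmod ((\<Sum>m<Suc M. a n m) - g n)) + cmod ((\<Sum>n<Suc N. g n) - (\<Sum>n. g n))"
    by (rule order.trans[OF norm_triangle_ineq add_mono[OF norm_sum order_refl]])
  also have "\<dots> = (\<Sum>n<Suc N. cmod (g n - (\<Sum>m<Suc M. a n m))) + cmod ((\<Sum>n. g n) - (\<Sum>n<Suc N. g n))"
    by (simp add: norm_minus_commute)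
  also have "\<dots> \<le> (\<Sum>n<Suc N. B * \<theta> ^ n * \<theta> ^ Suc M / (1 - \<theta>)) + (B / (1 - \<theta>)) * \<theta> ^ Suc N / (1 - \<theta>)"
    by (intro add_mono sum_mono gt gtail)
  also have "(\<Sum>n<Suc N. B * \<theta> ^ n * \<theta> ^ Suc M / (1 - \<theta>)) = (\<Sum>n<Suc N. \<theta> ^ n * (B * \<theta> ^ Suc M / (1 - \<theta>)))"
    by (intro sum.cong refl) simp
  also have "\<dots> = B * \<theta> ^ Suc M / (1 - \<theta>) * (\<Sum>n<Suc N. \<theta> ^ n)"
    by (simp only: sum_distrib_right[symmetric] mult.commute)
  also have "(\<Sum>n<Suc N. \<theta> ^ n) \<le> 1 / (1 - \<theta>)"
  proof -
    have sg: "summable (\<lambda>n. \<theta> ^ n)" using t0 t1 by (intro summable_geometric) auto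
    have "(\<Sum>n<Suc N. \<theta> ^ n) \<le> (\<Sum>n. \<theta> ^ n)"
      by (rule sum_le_suminf[OF sg]) (use t0 in auto)
    also have "\<dots> = 1 / (1 - \<theta>)" using t0 t1 by (intro suminf_geometric) auto
    finally show ?thesis .
  qed
  then have hX: "B * \<theta> ^ Suc M / (1 - \<theta>) * (\<Sum>n<Suc N. \<theta> ^ n) \<le> B * \<theta> ^ Suc M / (1 - \<theta>) * (1 / (1 - \<theta>))"
    using B0 t0 t1 by (intro mult_left_mono) auto
  have e1: "B * \<theta> ^ Suc M / (1 - \<theta>) * (1 / (1 - \<theta>)) = B / (1 - \<theta>)^2 * \<theta> ^ Suc M"
    by (simp add: power2_eq_square)
  have e2: "(B / (1 - \<theta>)) * \<theta> ^ Suc N / (1 - \<theta>) = B / (1 - \<theta>)^2 * \<theta> ^ Suc N"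
    by (simp add: power2_eq_square)
  have "B * \<theta> ^ Suc M / (1 - \<theta>) * (\<Sum>n<Suc N. \<theta> ^ n) + (B / (1 - \<theta>)) * \<theta> ^ Suc N / (1 - \<theta>)
      \<le> B / (1 - \<theta>)^2 * (\<theta> ^ Suc N + \<theta> ^ Suc M)"
    using hX e1 e2 distrib_left[of "B / (1 - \<theta>)^2" "\<theta> ^ Suc N" "\<theta> ^ Suc M"] by linarith
  finally show ?thesis by linarith
qed

lemma uniform_limit_double_sum:
  fixes a :: "nat \<Rightarrow> nat \<Rightarrow> 'x \<Rightarrow> complex" and B \<theta> :: real
  assumes b: "\<And>x n m. x \<in> S \<Longrightarrow> cmod (a n m x) \<le> B * \<theta> ^ (n + m)" and t0: "0 \<le> \<theta>" and t1: "\<theta> < 1"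
  shows "uniform_limit S (\<lambda>(N, M) x. \<Sum>n\<le>N. \<Sum>m\<le>M. a n m x) (\<lambda>x. \<Sum>n. \<Sum>m. a n m x) (sequentially \<times>\<^sub>F sequentially)"
proof (rule uniform_limitI)
  fix e :: real assume e: "e > 0"
  have B0: "0 \<le> B" if ne: "S \<noteq> {}"
  proof -
    obtain x where "x \<in> S" using ne by auto
    then show ?thesis using b[of x 0 0] by (metis norm_ge_zero order_trans power_0 mult_1_right add_0)
  qed
  have lim: "(\<lambda>N. \<bar>B\<bar> / (1 - \<theta>)^2 * \<theta> ^ Suc N) \<longlonglongrightarrow> 0"
    using t0 t1 by (intro tendsto_mult_right_zero LIMSEQ_power_zero[THEN LIMSEQ_Suc]) auto
  then obtain N0 where N0: "\<And>N. N \<ge> N0 \<Longrightarrow> \<bar>B\<bar> / (1 - \<theta>)^2 * \<theta> ^ Suc N < e / 2"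
    using e unfolding LIMSEQ_def dist_real_def by (metis abs_less_iff add_0 diff_0_right half_gt_zero order_le_less_trans abs_ge_self)
  show "\<forall>\<^sub>F NM in sequentially \<times>\<^sub>F sequentially. \<forall>x\<in>S.
      dist ((\<lambda>(N, M) x. \<Sum>n\<le>N. \<Sum>m\<le>M. a n m x) NM x) (\<Sum>n. \<Sum>m. a n m x) < e"
    unfolding eventually_prod_sequentially
  proof (intro exI[of _ N0] allI impI ballI)
    fix M N x assume MN: "M \<ge> N0" "N \<ge> N0" and x: "x \<in> S"
    have "cmod ((\<Sum>n\<le>N. \<Sum>m\<le>M. a n m x) - (\<Sum>n. \<Sum>m. a n m x)) \<le> B / (1 - \<theta>)^2 * (\<theta> ^ Suc N + \<theta> ^ Suc M)"
      by (rule double_sum_tail_bound[OF b[OF x] t0 t1])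
    also have "\<dots> = \<bar>B\<bar> / (1 - \<theta>)^2 * \<theta> ^ Suc N + \<bar>B\<bar> / (1 - \<theta>)^2 * \<theta> ^ Suc M"
    proof -
      have "S \<noteq> {}" using x by auto
      then have Bx: "\<bar>B\<bar> = B" using B0 by simp
      show ?thesis by (simp only: Bx distrib_left)
    qed
    also have "\<dots> < e / 2 + e / 2" using N0 MN by (intro add_strict_mono) auto
    finally show "dist ((\<lambda>(N, M) x. \<Sum>n\<le>N. \<Sum>m\<le>M. a n m x) (N, M) x) (\<Sum>n. \<Sum>m. a n m x) < e"
      by (simp add: dist_norm)
  qed
qed

lemma uniform_limit_double_sum_diagonal:
  fixes a :: "nat \<Rightarrow> nat \<Rightarrow> 'x \<Rightarrow> complex" and B \<theta> :: real
  assumes b: "\<And>x n m. x \<in> S \<Longrightarrow> cmod (a n m x) \<le> B * \<theta> ^ (n + m)" and t0: "0 \<le> \<theta>" and t1: "\<theta> < 1"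
  shows "uniform_limit S (\<lambda>N x. \<Sum>n\<le>N. \<Sum>m\<le>N. a n m x) (\<lambda>x. \<Sum>n. \<Sum>m. a n m x) sequentially"
proof -
  have "filterlim (\<lambda>N. (N, N)) (sequentially \<times>\<^sub>F sequentially) sequentially"
    by (intro filterlim_Pair filterlim_ident)
  from filterlim_compose[OF uniform_limit_double_sum[OF b t0 t1] this] show ?thesis
    by (simp add: o_def)
qed

section \<open>Holomorphy and convergence of the formal solution\<close>

lemma nonres_L0s:
  assumes x1: "norm \<xi> < 1" and x0: "\<xi> \<noteq> 0" and L: "\<Lambda> \<in> L0s \<xi>"
  shows "nonres \<Lambda> \<xi>"
proof -
  have n1: "1 < norm \<Lambda>" and n2: "norm \<Lambda> < inverse (norm \<xi>)" using L by (auto simp: L0s_def)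
  have a: "cmod (\<xi> * \<Lambda>) < 1"
  proof -
    have "cmod (\<xi> * \<Lambda>) = norm \<xi> * norm \<Lambda>" by (simp add: norm_mult)
    also have "\<dots> < norm \<xi> * inverse (norm \<xi>)" using n2 x0 by (intro mult_strict_left_mono) auto
    also have "\<dots> = 1" using x0 by simp
    finally show ?thesis .
  qed
  have b: "cmod (inverse \<Lambda>) < 1" using n1 by (simp add: norm_inverse inverse_less_1_iff)
  define \<rho> where "\<rho> = max (cmod (\<xi> * \<Lambda>)) (cmod (inverse \<Lambda>))"
  have r1: "\<rho> < 1" using a b by (simp add: \<rho>_def)
  have r0: "0 \<le> \<rho>" by (simp add: \<rho>_def le_max_iff_disj)
  show ?thesis unfolding nonres_def
  proof (intro allI impI)
    fix m n :: nat assume "(m, n) \<noteq> (0, 0)"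
    then have "cmod ((\<xi> * \<Lambda>) ^ m * inverse \<Lambda> ^ n) \<le> \<rho>"
      using r1 r0 by (intro norm_power_mult_power_le) (auto simp: \<rho>_def)
    then show "(\<xi> * \<Lambda>) ^ m * inverse \<Lambda> ^ n \<noteq> 1" using r1 by auto
  qed
qed

lemma open_L0s: "open (L0s \<xi>)"
proof -
  have "L0s \<xi> = {x. 1 < norm x} \<inter> {x. norm x < inverse (norm \<xi>)}" by (auto simp: L0s_def)
  moreover have "open {x::complex. 1 < norm x}" by (rule open_Collect_less) (auto intro: continuous_intros)
  moreover have "open {x::complex. norm x < inverse (norm \<xi>)}" by (rule open_Collect_less) (auto intro: continuous_intros)
  ultimately show ?thesis by auto
qed

lemma poly6_holomorphic: "poly6 P \<Longrightarrow> (\<lambda>l. P (l, s, a, b, c, d)) holomorphic_on A"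
  by (induction rule: poly6.induct) (auto intro!: holomorphic_intros)

lemma L0s_regular_params:
  assumes "norm \<xi> < 1" "\<xi> \<noteq> 0" "a \<noteq> 0" "b \<noteq> 0" "c \<noteq> 0" "d \<noteq> 0" "l \<in> L0s \<xi>"
  shows "(l, \<xi>, a, b, c, d) \<in> regular_params"
proof -
  have "l \<noteq> 0" using assms(7) by (auto simp: L0s_def)
  then show ?thesis using assms nonres_L0s[OF assms(1,2,7)] by (simp add: regular_params_def)
qed

lemma rational_regular_on_holomorphic:
  assumes "rational_regular_on f S" "\<And>l. l \<in> A \<Longrightarrow> (l, s, a, b, c, d) \<in> S"
  shows "(\<lambda>l. f (l, s, a, b, c, d)) holomorphic_on A"
proof -
  obtain P Q where PQ: "poly6 P" "poly6 Q" "\<And>p. p \<in> S \<Longrightarrow> Q p \<noteq> 0" "\<And>p. p \<in> S \<Longrightarrow> f p = P p / Q p"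
    using assms(1) by (rule rational_regular_onE) blast
  have "(\<lambda>l. P (l, s, a, b, c, d) / Q (l, s, a, b, c, d)) holomorphic_on A"
    using PQ assms(2) by (intro holomorphic_intros poly6_holomorphic) auto
  then show ?thesis
    by (rule holomorphic_transform) (use PQ assms(2) in auto)
qed

lemma holomorphic_coeff2_formal_sol:
  assumes "norm \<xi> < 1" "\<xi> \<noteq> 0" "a \<noteq> 0" "b \<noteq> 0" "c \<noteq> 0" "d \<noteq> 0"
  shows "(\<lambda>l. coeff2 (formal_sol l \<xi> a b c d) k m) holomorphic_on L0s \<xi>"
proof -
  have "(\<lambda>l. sol_coeff (Suc k) (int (Suc k) - int m) (l, \<xi>, a, b, c, d)) holomorphic_on L0s \<xi>"
    by (rule rational_regular_on_holomorphic[OF rational_regular_on_sol_coeff L0s_regular_params[OF assms]])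
  then show ?thesis using sol_coeff_eq_formal_sol[of "Suc k" m _ \<xi> a b c d] by simp
qed

lemma norm_deriv_le_Cauchy:
  assumes "h holomorphic_on A" "cball l e \<subseteq> A" "0 < e" "\<And>x. x \<in> cball l e \<Longrightarrow> cmod (h x) \<le> B"
  shows "cmod (deriv h l) \<le> B / e"
proof -
  have "norm ((deriv ^^ 1) h l) \<le> fact 1 * B / e ^ 1"
  proof (rule Cauchy_inequality)
    show "h holomorphic_on ball l e"
      using holomorphic_on_subset[OF assms(1)] assms(2) ball_subset_cball by blast
    show "continuous_on (cball l e) h"
      using holomorphic_on_imp_continuous_on holomorphic_on_subset[OF assms(1,2)] by blast
    show "0 < e" by (rule assms(3))
    show "norm (l - x) = e \<Longrightarrow> cmod (h x) \<le> B" for x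
      using assms(4)[of x] by (simp add: dist_norm)
  qed
  then show ?thesis by simp
qed

lemma formal_sol_coeff_bound_annulus:
  assumes \<xi>: "\<xi> \<noteq> 0" "norm \<xi> < 1" and nz: "a \<noteq> 0" "b \<noteq> 0" "c \<noteq> 0" "d \<noteq> 0"
    and R: "1 < R1" "R1 \<le> R2" "R2 < inverse (norm \<xi>)"
  obtains r where "0 < r" "r \<le> 1"
    "\<And>y k m. R1 \<le> norm y \<Longrightarrow> norm y \<le> R2 \<Longrightarrow> cmod (coeff2 (formal_sol y \<xi> a b c d) k m) \<le> 2 / r ^ (k + m)"
proof -
  have nx: "0 < norm \<xi>" using \<xi> by simp
  define \<rho> where "\<rho> = max (inverse R1) (norm \<xi> * R2)"
  have \<rho>: "0 \<le> \<rho>" "\<rho> < 1"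
  proof -
    have "inverse R1 < 1" using R by (simp add: inverse_less_1_iff)
    moreover have "norm \<xi> * R2 < norm \<xi> * inverse (norm \<xi>)" using R nx by (intro mult_strict_left_mono) auto
    ultimately show "0 \<le> \<rho>" "\<rho> < 1" using nx R by (auto simp: \<rho>_def le_max_iff_disj)
  qed
  define M where "M = 1 + norm \<xi> + norm (inverse \<xi>) + norm a + norm (inverse a) + norm b + norm (inverse b)
     + norm c + norm (inverse c) + norm d + norm (inverse d) + inverse (norm \<xi> * R1)"
  have iR: "0 \<le> inverse (norm \<xi> * R1)" using R nx by simp
  have M: "1 \<le> M" "cmod \<xi> \<le> M" "cmod (inverse \<xi>) \<le> M" "cmod a \<le> M" "cmod (inverse a) \<le> M"
      "cmod b \<le> M" "cmod (inverse b) \<le> M" "cmod c \<le> M" "cmod (inverse c) \<le> M"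
      "cmod d \<le> M" "cmod (inverse d) \<le> M" "inverse (norm \<xi> * R1) \<le> M"
    using iR unfolding M_def by (simp_all add: add_increasing add_increasing2)
  obtain r where r: "0 < r" "r \<le> 1" and bound: "\<And>l k m. l \<noteq> 0 \<Longrightarrow> cmod (\<xi> * l) \<le> \<rho> \<Longrightarrow>
      cmod (inverse l) \<le> \<rho> \<Longrightarrow> cmod (inverse (\<xi> * l)) \<le> M \<Longrightarrow>
      cmod (coeff2 (formal_sol l \<xi> a b c d) k m) \<le> 2 / r ^ (k + m)"
    using formal_sol_coeff_bound[OF \<rho> M(1) \<xi>(1) nz(3,4) M(2-11)] by blast
  show ?thesis
  proof (rule that[OF r])
    fix y :: complex and k m :: nat assume y: "R1 \<le> norm y" "norm y \<le> R2"
    have "cmod (\<xi> * y) \<le> \<rho>"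
      using y mult_left_mono[OF y(2), of "norm \<xi>"] by (simp add: norm_mult \<rho>_def)
    moreover have "cmod (inverse y) \<le> \<rho>"
      using y R le_imp_inverse_le[OF y(1)] by (simp add: norm_inverse \<rho>_def)
    moreover have "inverse (norm \<xi> * norm y) \<le> inverse (norm \<xi> * R1)"
      using R nx y by (intro le_imp_inverse_le mult_left_mono) auto
    then have "cmod (inverse (\<xi> * y)) \<le> M"
      using M(12) by (simp add: norm_inverse norm_mult del: inverse_mult_distrib)
    moreover have "y \<noteq> 0" using y R by auto
    ultimately show "cmod (coeff2 (formal_sol y \<xi> a b c d) k m) \<le> 2 / r ^ (k + m)"
      using bound by blast
  qed
qed

lemma annulus_margin:
  assumes x1: "norm \<xi> < 1" and x0: "\<xi> \<noteq> 0" and K: "compact K" "K \<subseteq> L0s \<xi>"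
  shows "\<exists>e R1 R2. 0 < e \<and> 1 < R1 \<and> R1 \<le> R2 \<and> R2 < inverse (norm \<xi>) \<and>
     (\<forall>x\<in>K. \<forall>y\<in>cball x e. R1 \<le> norm y \<and> norm y \<le> R2)"
proof (cases "K = {}")
  case True
  have "1 < (1 + inverse (norm \<xi>)) / 2" using x1 x0
    by (simp add: field_simps)
  moreover have "(1 + inverse (norm \<xi>)) / 2 < inverse (norm \<xi>)" using x1 x0
    by (simp add: field_simps)
  ultimately show ?thesis using True by (intro exI[of _ 1] exI[of _ "(1 + inverse (norm \<xi>)) / 2"]) auto
next
  case False
  obtain x1' where x1': "x1' \<in> K" "\<forall>y\<in>K. norm x1' \<le> norm y"
    using continuous_attains_inf[OF K(1) False, of norm] by (auto intro: continuous_intros)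
  obtain x2' where x2': "x2' \<in> K" "\<forall>y\<in>K. norm y \<le> norm x2'"
    using continuous_attains_sup[OF K(1) False, of norm] by (auto intro: continuous_intros)
  define m1 where "m1 = norm x1'"
  define m2 where "m2 = norm x2'"
  have m1: "1 < m1" using x1' K(2) by (auto simp: L0s_def m1_def)
  have m2: "m2 < inverse (norm \<xi>)" using x2' K(2) by (auto simp: L0s_def m2_def)
  have m12: "m1 \<le> m2" using x1' x2' by (auto simp: m1_def m2_def)
  define e where "e = min ((m1 - 1) / 2) ((inverse (norm \<xi>) - m2) / 2)"
  have e0: "0 < e" using m1 m2 by (simp add: e_def)
  show ?thesis
  proof (intro exI conjI ballI)
    show "0 < e" by (rule e0)
    have "e \<le> (m1 - 1) / 2" unfolding e_def by (rule min.cobounded1)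
    then have "2 * e \<le> m1 - 1" by simp
    then show "1 < m1 - e" using m1 e0 by linarith
    show "m1 - e \<le> m2 + e" using m12 e0 by simp
    have "e \<le> (inverse (norm \<xi>) - m2) / 2" unfolding e_def by (rule min.cobounded2)
    then have "2 * e \<le> inverse (norm \<xi>) - m2" by simp
    then show "m2 + e < inverse (norm \<xi>)" using m2 e0 by linarith
  next
    fix x y assume x: "x \<in> K" and y: "y \<in> cball x e"
    have d: "norm (y - x) \<le> e" using y by (simp add: dist_norm norm_minus_commute)
    have "m1 \<le> norm x" "norm x \<le> m2" using x x1' x2' by (auto simp: m1_def m2_def)
    moreover have "norm x - norm (y - x) \<le> norm y" "norm y \<le> norm x + norm (y - x)"
      using norm_triangle_ineq2[of x "x - y"] norm_triangle_ineq[of x "y - x"]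
      by (auto simp: norm_minus_commute)
    ultimately show "m1 - e \<le> norm y" "norm y \<le> m2 + e" using d by linarith+
  qed
qed

type_synonym complex3 = "complex \<times> complex \<times> complex"

definition term3 :: "(nat \<Rightarrow> nat \<Rightarrow> complex \<Rightarrow> complex) \<Rightarrow> nat \<Rightarrow> nat \<Rightarrow> complex3 \<Rightarrow> complex" where
  "term3 hh n m z = (if n = 0 then 0 else hh (n - 1) m (snd (snd z)) * fst z ^ n * fst (snd z) ^ m)"
definition dterm1 :: "(nat \<Rightarrow> nat \<Rightarrow> complex \<Rightarrow> complex) \<Rightarrow> nat \<Rightarrow> nat \<Rightarrow> complex3 \<Rightarrow> complex" where
  "dterm1 hh n m z = (if n = 0 then 0 else hh (n - 1) m (snd (snd z)) * (of_nat n * fst z ^ (n - 1)) * fst (snd z) ^ m)"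
definition dterm2 :: "(nat \<Rightarrow> nat \<Rightarrow> complex \<Rightarrow> complex) \<Rightarrow> nat \<Rightarrow> nat \<Rightarrow> complex3 \<Rightarrow> complex" where
  "dterm2 hh n m z = (if n = 0 then 0 else hh (n - 1) m (snd (snd z)) * fst z ^ n * (of_nat m * fst (snd z) ^ (m - 1)))"
definition dterm3 :: "(nat \<Rightarrow> nat \<Rightarrow> complex \<Rightarrow> complex) \<Rightarrow> nat \<Rightarrow> nat \<Rightarrow> complex3 \<Rightarrow> complex" where
  "dterm3 hh n m z = (if n = 0 then 0 else deriv (hh (n - 1) m) (snd (snd z)) * fst z ^ n * fst (snd z) ^ m)"

lemma has_derivative_monomial3:
  fixes H :: "complex \<Rightarrow> complex" and z :: complex3
  assumes "(H has_field_derivative H') (at (snd (snd z)))"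
  shows "((\<lambda>z. H (snd (snd z)) * fst z ^ n * fst (snd z) ^ m) has_derivative
     (\<lambda>v. H (snd (snd z)) * (of_nat n * fst z ^ (n - 1)) * fst (snd z) ^ m * fst v
        + H (snd (snd z)) * fst z ^ n * (of_nat m * fst (snd z) ^ (m - 1)) * fst (snd v)
        + H' * fst z ^ n * fst (snd z) ^ m * snd (snd v))) (at z)"
proof -
  have 1: "((\<lambda>z::complex3. H (snd (snd z))) has_derivative (\<lambda>v. H' * snd (snd v))) (at z)"
    using has_derivative_compose[OF has_derivative_snd[OF has_derivative_snd[OF has_derivative_ident]]
        has_field_derivative_imp_has_derivative[OF assms]] by simp
  have 2: "((\<lambda>z::complex3. fst z ^ n) has_derivative (\<lambda>v. of_nat n * fst v * fst z ^ (n - 1))) (at z)"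
    by (rule has_derivative_power[OF has_derivative_fst[OF has_derivative_ident]])
  have 3: "((\<lambda>z::complex3. fst (snd z) ^ m) has_derivative (\<lambda>v. of_nat m * fst (snd v) * fst (snd z) ^ (m - 1))) (at z)"
    by (rule has_derivative_power[OF has_derivative_fst[OF has_derivative_snd[OF has_derivative_ident]]])
  show ?thesis
    by (rule has_derivative_eq_rhs[OF has_derivative_mult[OF has_derivative_mult[OF 1 2] 3]])
       (simp add: fun_eq_iff algebra_simps)
qed

lemma term3_deriv:
  assumes "hh (n - 1) m holomorphic_on A" "open A" "snd (snd z) \<in> A"
  shows "(term3 hh n m has_derivative
     (\<lambda>v. dterm1 hh n m z * fst v + dterm2 hh n m z * fst (snd v) + dterm3 hh n m z * snd (snd v))) (at z)"
proof (cases "n = 0")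
  case True
  then have "term3 hh n m = (\<lambda>z. 0)" by (simp add: term3_def fun_eq_iff)
  then show ?thesis using True by (simp add: dterm1_def dterm2_def dterm3_def)
next
  case False
  have d: "(hh (n - 1) m has_field_derivative deriv (hh (n - 1) m) (snd (snd z))) (at (snd (snd z)))"
    using holomorphic_derivI[OF assms, of UNIV] by simp
  have e: "term3 hh n m = (\<lambda>z. hh (n - 1) m (snd (snd z)) * fst z ^ n * fst (snd z) ^ m)"
    using False by (simp add: term3_def fun_eq_iff)
  show ?thesis
    unfolding e using has_derivative_monomial3[OF d, of n m] False
    by (simp add: dterm1_def dterm2_def dterm3_def)
qed

lemma norm_components_le:
  fixes h :: complex3
  shows "cmod (fst h) \<le> norm h" "cmod (fst (snd h)) \<le> norm h" "cmod (snd (snd h)) \<le> norm h"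
proof -
  obtain h1 h2 h3 where h: "h = (h1, h2, h3)" by (cases h) auto
  have "norm h1 \<le> norm (h1, h2, h3)" "norm (h2, h3) \<le> norm (h1, h2, h3)"
    "norm h2 \<le> norm (h2, h3)" "norm h3 \<le> norm (h2, h3)"
    by (rule norm_fst_le norm_snd_le)+
  then show "cmod (fst h) \<le> norm h" "cmod (fst (snd h)) \<le> norm h" "cmod (snd (snd h)) \<le> norm h"
    unfolding h by auto
qed

lemma holo3_uniform_limit:
  fixes f Du Dv Dw :: "nat \<Rightarrow> complex3 \<Rightarrow> complex" and \<Omega> :: "complex3 set"
  assumes \<Omega>: "open \<Omega>"
    and deriv: "\<And>N x. x \<in> \<Omega> \<Longrightarrow>
      (f N has_derivative (\<lambda>v. Du N x * fst v + Dv N x * fst (snd v) + Dw N x * snd (snd v))) (at x)"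
    and F: "uniform_limit \<Omega> f F sequentially"
    and A: "uniform_limit \<Omega> Du Au sequentially" "uniform_limit \<Omega> Dv Av sequentially"
      "uniform_limit \<Omega> Dw Aw sequentially"
  shows "holo3 F \<Omega>"
  unfolding holo3_def
proof
  fix z0 assume z0: "z0 \<in> \<Omega>"
  obtain \<epsilon> where "\<epsilon> > 0" and S\<Omega>: "ball z0 \<epsilon> \<subseteq> \<Omega>" using \<Omega> z0 open_contains_ball by blast
  then have z0S: "z0 \<in> ball z0 \<epsilon>" by simp
  define f' where "f' N x = (\<lambda>v :: complex3. Du N x * fst v + Dv N x * fst (snd v) + Dw N x * snd (snd v))"
    for N x
  define g' where "g' x = (\<lambda>v :: complex3. Au x * fst v + Av x * fst (snd v) + Aw x * snd (snd v))" for x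
  have derf: "(f N has_derivative f' N x) (at x within ball z0 \<epsilon>)" if "x \<in> ball z0 \<epsilon>" for N x
  proof -
    have "x \<in> \<Omega>" using that S\<Omega> by auto
    from has_derivative_at_withinI[OF deriv[OF this]] show ?thesis by (simp add: f'_def)
  qed
  have conv: "\<forall>\<^sub>F N in sequentially. \<forall>x\<in>ball z0 \<epsilon>. \<forall>h. norm (f' N x h - g' x h) \<le> e * norm h"
    if e: "e > 0" for e
  proof -
    have "e / 3 > 0" using e by simp
    from uniform_limitD[OF A(1) this] uniform_limitD[OF A(2) this] uniform_limitD[OF A(3) this]
    have "\<forall>\<^sub>F N in sequentially. \<forall>x\<in>\<Omega>. dist (Du N x) (Au x) < e / 3 \<and> dist (Dv N x) (Av x) < e / 3
        \<and> dist (Dw N x) (Aw x) < e / 3"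
      by eventually_elim blast
    then show ?thesis
    proof (rule eventually_mono, intro ballI allI)
      fix N x h
      assume "\<forall>x\<in>\<Omega>. dist (Du N x) (Au x) < e / 3 \<and> dist (Dv N x) (Av x) < e / 3 \<and> dist (Dw N x) (Aw x) < e / 3"
        and "x \<in> ball z0 \<epsilon>"
      then have d: "cmod (Du N x - Au x) < e / 3" "cmod (Dv N x - Av x) < e / 3" "cmod (Dw N x - Aw x) < e / 3"
        using S\<Omega> by (auto simp: dist_norm)
      have "norm (f' N x h - g' x h)
          \<le> cmod ((Du N x - Au x) * fst h) + cmod ((Dv N x - Av x) * fst (snd h)) + cmod ((Dw N x - Aw x) * snd (snd h))"
        unfolding f'_def g'_def
        by (rule order.trans[OF _ add_mono[OF norm_triangle_ineq order_refl]],
            rule order.trans[OF _ norm_triangle_ineq]) (simp add: algebra_simps)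
      also have "\<dots> \<le> (e / 3) * norm h + (e / 3) * norm h + (e / 3) * norm h"
        unfolding norm_mult using d norm_components_le[of h] e by (intro add_mono mult_mono) auto
      finally show "norm (f' N x h - g' x h) \<le> e * norm h" by simp
    qed
  qed
  obtain g where g: "\<forall>x\<in>ball z0 \<epsilon>. (\<lambda>N. f N x) \<longlonglongrightarrow> g x \<and> (g has_derivative g' x) (at x within ball z0 \<epsilon>)"
    using has_derivative_sequence[OF convex_ball derf conv z0S tendsto_uniform_limitI[OF F z0]] by blast
  have gF: "g x = F x" if "x \<in> ball z0 \<epsilon>" for x
    using g that tendsto_uniform_limitI[OF F] S\<Omega> LIMSEQ_unique by blast
  have "(g has_derivative g' z0) (at z0)" using g z0S at_within_open[OF z0S] by fastforce
  then have "(F has_derivative g' z0) (at z0)"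
    by (rule has_derivative_transform_within_open[of g _ z0 UNIV "ball z0 \<epsilon>" F, simplified])
       (use z0S gF in auto)
  moreover have "\<forall>u v w. g' z0 (\<i> * u, \<i> * v, \<i> * w) = \<i> * g' z0 (u, v, w)"
    by (simp add: g'_def algebra_simps)
  ultimately show "\<exists>D. (F has_derivative D) (at z0) \<and> (\<forall>u v w. D (\<i> * u, \<i> * v, \<i> * w) = \<i> * D (u, v, w))"
    by blast
qed

lemma holo3_double_series:
  fixes hh :: "nat \<Rightarrow> nat \<Rightarrow> complex \<Rightarrow> complex" and \<Omega> :: "complex3 set"
  assumes \<Omega>: "open \<Omega>" and A: "open A" "\<And>z. z \<in> \<Omega> \<Longrightarrow> snd (snd z) \<in> A"
    and holo: "\<And>k m. hh k m holomorphic_on A"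
    and t: "0 \<le> \<theta>" "\<theta> < 1"
    and b0: "\<And>z n m. z \<in> \<Omega> \<Longrightarrow> cmod (term3 hh n m z) \<le> B * \<theta> ^ (n + m)"
    and b1: "\<And>z n m. z \<in> \<Omega> \<Longrightarrow> cmod (dterm1 hh n m z) \<le> B * \<theta> ^ (n + m)"
    and b2: "\<And>z n m. z \<in> \<Omega> \<Longrightarrow> cmod (dterm2 hh n m z) \<le> B * \<theta> ^ (n + m)"
    and b3: "\<And>z n m. z \<in> \<Omega> \<Longrightarrow> cmod (dterm3 hh n m z) \<le> B * \<theta> ^ (n + m)"
  shows "holo3 (\<lambda>z. \<Sum>n. \<Sum>m. term3 hh n m z) \<Omega>"
proof (rule holo3_uniform_limit[OF \<Omega>, where f = "\<lambda>N z. \<Sum>n\<le>N. \<Sum>m\<le>N. term3 hh n m z"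
    and Du = "\<lambda>N z. \<Sum>n\<le>N. \<Sum>m\<le>N. dterm1 hh n m z" and Dv = "\<lambda>N z. \<Sum>n\<le>N. \<Sum>m\<le>N. dterm2 hh n m z"
    and Dw = "\<lambda>N z. \<Sum>n\<le>N. \<Sum>m\<le>N. dterm3 hh n m z" and Au = "\<lambda>z. \<Sum>n. \<Sum>m. dterm1 hh n m z"
    and Av = "\<lambda>z. \<Sum>n. \<Sum>m. dterm2 hh n m z" and Aw = "\<lambda>z. \<Sum>n. \<Sum>m. dterm3 hh n m z"])
  fix N x assume "x \<in> \<Omega>"
  then have "((\<lambda>z. \<Sum>n\<le>N. \<Sum>m\<le>N. term3 hh n m z) has_derivative (\<lambda>v. \<Sum>n\<le>N. \<Sum>m\<le>N.
      dterm1 hh n m x * fst v + dterm2 hh n m x * fst (snd v) + dterm3 hh n m x * snd (snd v))) (at x)"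
    by (intro has_derivative_sum term3_deriv[OF holo A(1) A(2)])
  then show "((\<lambda>z. \<Sum>n\<le>N. \<Sum>m\<le>N. term3 hh n m z) has_derivative (\<lambda>v.
      (\<Sum>n\<le>N. \<Sum>m\<le>N. dterm1 hh n m x) * fst v + (\<Sum>n\<le>N. \<Sum>m\<le>N. dterm2 hh n m x) * fst (snd v)
      + (\<Sum>n\<le>N. \<Sum>m\<le>N. dterm3 hh n m x) * snd (snd v))) (at x)"
    by (simp add: sum.distrib sum_distrib_right)
qed (simp_all only: uniform_limit_double_sum_diagonal[OF b0 t] uniform_limit_double_sum_diagonal[OF b1 t]
      uniform_limit_double_sum_diagonal[OF b2 t] uniform_limit_double_sum_diagonal[OF b3 t])

lemma norm_power_mult_power_quarter:
  fixes z1 z2 :: complex and r :: real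
  assumes "0 < r" "cmod z1 \<le> r / 4" "cmod z2 \<le> r / 4"
  shows "cmod z1 ^ p * cmod z2 ^ q \<le> r ^ (p + q) * (1 / 4) ^ (p + q)"
proof -
  have "cmod z1 ^ p * cmod z2 ^ q \<le> (r / 4) ^ p * (r / 4) ^ q"
    using assms by (intro mult_mono power_mono) auto
  also have "\<dots> = r ^ (p + q) * (1 / 4) ^ (p + q)"
    by (simp add: power_add power_divide field_simps)
  finally show ?thesis .
qed

lemma norm_one_plus_of_nat: "cmod (1 + of_nat k) = 1 + real k"
proof -
  have "(1 + of_nat k :: complex) = of_nat (Suc k)" by simp
  then show ?thesis by (metis norm_of_nat of_nat_Suc)
qed

lemma quarter_power_le_half_power: "(1 / 4 :: real) ^ n \<le> (1 / 2) ^ n"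
  by (intro power_mono) auto

lemma norm_power_mult_bound:
  fixes z1 z2 x :: complex and r C :: real
  assumes r: "0 < r" "r \<le> 1" and x: "cmod x \<le> C / r ^ (k + m)" and C: "0 \<le> C"
    and z: "cmod z1 \<le> r / 4" "cmod z2 \<le> r / 4"
  shows "cmod (x * z1 ^ Suc k * z2 ^ m) \<le> C * (1 / 2) ^ (Suc k + m)"
proof -
  have "cmod (x * z1 ^ Suc k * z2 ^ m) = cmod x * (cmod z1 ^ Suc k * cmod z2 ^ m)"
    by (simp add: norm_mult norm_power mult_ac)
  also have "\<dots> \<le> (C / r ^ (k + m)) * (r ^ (Suc k + m) * (1 / 4) ^ (Suc k + m))"
    by (rule mult_mono[OF x norm_power_mult_power_quarter[OF r(1) z]]) (use C r in auto)
  also have "\<dots> = C * r * (1 / 4) ^ (Suc k + m)"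
    using r by (simp add: field_simps)
  also have "\<dots> \<le> C * 1 * (1 / 2) ^ (Suc k + m)"
    using r C quarter_power_le_half_power[of "Suc k + m"] by (intro mult_mono) auto
  finally show ?thesis by simp
qed

lemma Suc_le_two_power: "real (Suc k) \<le> 2 ^ k"
proof -
  have "Suc k \<le> 2 ^ k" by (induction k) auto
  then show ?thesis by (metis of_nat_le_iff of_nat_numeral of_nat_power)
qed

lemma norm_power_mult_bound_d1:
  fixes z1 z2 x :: complex and r C :: real
  assumes r: "0 < r" "r \<le> 1" and x: "cmod x \<le> C / r ^ (k + m)" and C: "0 \<le> C"
    and z: "cmod z1 \<le> r / 4" "cmod z2 \<le> r / 4"
  shows "cmod (x * (of_nat (Suc k) * z1 ^ k) * z2 ^ m) \<le> (2 * C) * (1 / 2) ^ (Suc k + m)"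
proof -
  have "cmod (x * (of_nat (Suc k) * z1 ^ k) * z2 ^ m) = cmod x * real (Suc k) * (cmod z1 ^ k * cmod z2 ^ m)"
    by (simp add: norm_mult norm_power mult_ac norm_one_plus_of_nat)
  also have "\<dots> \<le> (C / r ^ (k + m)) * 2 ^ k * (r ^ (k + m) * (1 / 4) ^ (k + m))"
  proof -
    have a: "cmod x * real (Suc k) \<le> (C / r ^ (k + m)) * 2 ^ k"
      by (rule mult_mono[OF x Suc_le_two_power]) (use C r in auto)
    show ?thesis by (rule mult_mono[OF a norm_power_mult_power_quarter[OF r(1) z]]) (use C r in auto)
  qed
  also have "\<dots> = C * (2 ^ k * (1 / 4) ^ k) * (1 / 4) ^ m"
    using r by (simp add: field_simps power_add)
  also have "2 ^ k * (1 / 4) ^ k = ((1::real) / 2) ^ k"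
    by (simp add: power_divide field_simps flip: power_mult_distrib)
  also have "C * (1 / 2) ^ k * (1 / 4) ^ m \<le> C * (1 / 2) ^ k * (1 / 2) ^ m"
    using C quarter_power_le_half_power[of m] by (intro mult_left_mono) auto
  also have "\<dots> = (2 * C) * (1 / 2) ^ (Suc k + m)"
    by (simp add: power_add)
  finally show ?thesis .
qed

lemma norm_power_mult_bound_d2:
  fixes z1 z2 x :: complex and r C :: real
  assumes r: "0 < r" "r \<le> 1" and x: "cmod x \<le> C / r ^ (k + m)" and C: "0 \<le> C"
    and z: "cmod z1 \<le> r / 4" "cmod z2 \<le> r / 4"
  shows "cmod (x * z1 ^ Suc k * (of_nat m * z2 ^ (m - 1))) \<le> (2 * C) * (1 / 2) ^ (Suc k + m)"
proof (cases m)
  case 0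
  then show ?thesis using C by simp
next
  case (Suc q)
  have "cmod (x * z1 ^ Suc k * (of_nat m * z2 ^ (m - 1))) = cmod x * real (Suc q) * (cmod z1 ^ Suc k * cmod z2 ^ q)"
    using Suc by (simp add: norm_mult norm_power mult_ac norm_one_plus_of_nat)
  also have "\<dots> \<le> (C / r ^ (k + m)) * 2 ^ q * (r ^ (Suc k + q) * (1 / 4) ^ (Suc k + q))"
  proof -
    have a: "cmod x * real (Suc q) \<le> (C / r ^ (k + m)) * 2 ^ q"
      by (rule mult_mono[OF x Suc_le_two_power]) (use C r in auto)
    show ?thesis by (rule mult_mono[OF a norm_power_mult_power_quarter[OF r(1) z]]) (use C r in auto)
  qed
  also have "\<dots> = C * (2 ^ q * (1 / 4) ^ q) * (1 / 4) ^ Suc k"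
    using r Suc by (simp add: field_simps power_add)
  also have "2 ^ q * (1 / 4) ^ q = ((1::real) / 2) ^ q"
    by (simp add: power_divide field_simps flip: power_mult_distrib)
  also have "C * (1 / 2) ^ q * (1 / 4) ^ Suc k \<le> C * (1 / 2) ^ q * (1 / 2) ^ Suc k"
    using C quarter_power_le_half_power[of "Suc k"] by (intro mult_left_mono) auto
  also have "\<dots> = (2 * C) * (1 / 2) ^ (Suc k + m)"
    using Suc by (simp add: power_add)
  finally show ?thesis .
qed

lemma sum_atMost_split_0: "(\<Sum>n\<le>N. f n) = f 0 + (\<Sum>n\<in>{1..N}. f (n::nat))"
proof -
  have "(\<Sum>n\<le>N. f n) = (\<Sum>n\<in>{0..N}. f n)" by (simp add: atMost_atLeast0)
  also have "\<dots> = f 0 + (\<Sum>n\<in>{Suc 0..N}. f n)" by (rule sum.atLeast_Suc_atMost) simp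
  finally show ?thesis by simp
qed

lemma term3_bounds:
  fixes hh :: "nat \<Rightarrow> nat \<Rightarrow> complex \<Rightarrow> complex" and z :: complex3 and r e :: real
  assumes r: "0 < r" "r \<le> 1" and e: "0 < e"
    and h: "\<And>k m. cmod (hh k m (snd (snd z))) \<le> 2 / r ^ (k + m)"
    and dh: "\<And>k m. cmod (deriv (hh k m) (snd (snd z))) \<le> (2 / e) / r ^ (k + m)"
    and z: "cmod (fst z) \<le> r / 4" "cmod (fst (snd z)) \<le> r / 4"
  shows "cmod (term3 hh n m z) \<le> (4 + 2 / e) * (1 / 2) ^ (n + m)"
    and "cmod (dterm1 hh n m z) \<le> (4 + 2 / e) * (1 / 2) ^ (n + m)"
    and "cmod (dterm2 hh n m z) \<le> (4 + 2 / e) * (1 / 2) ^ (n + m)"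
    and "cmod (dterm3 hh n m z) \<le> (4 + 2 / e) * (1 / 2) ^ (n + m)"
proof -
  have *: "x \<le> (4 + 2 / e) * (1 / 2) ^ (n + m)" if "x \<le> C * (1 / 2) ^ (n + m)" "C \<le> 4 + 2 / e"
    for x C :: real
    by (rule order_trans[OF that(1) mult_right_mono[OF that(2)]]) simp
  have C: "2 \<le> 4 + 2 / e" "2 * 2 \<le> 4 + 2 / e" "2 / e \<le> 4 + 2 / e" using e by auto
  show "cmod (term3 hh n m z) \<le> (4 + 2 / e) * (1 / 2) ^ (n + m)"
  proof (cases n)
    case (Suc k)
    have "cmod (term3 hh n m z) \<le> 2 * (1 / 2) ^ (Suc k + m)"
      unfolding term3_def using Suc norm_power_mult_bound[OF r h _ z] by simp
    then show ?thesis unfolding Suc[symmetric] by (rule *[OF _ C(1)])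
  qed (use e in \<open>simp add: term3_def\<close>)
  show "cmod (dterm1 hh n m z) \<le> (4 + 2 / e) * (1 / 2) ^ (n + m)"
  proof (cases n)
    case (Suc k)
    have "cmod (dterm1 hh n m z) \<le> (2 * 2) * (1 / 2) ^ (Suc k + m)"
      unfolding dterm1_def using Suc norm_power_mult_bound_d1[OF r h _ z] by simp
    then show ?thesis unfolding Suc[symmetric] by (rule *[OF _ C(2)])
  qed (use e in \<open>simp add: dterm1_def\<close>)
  show "cmod (dterm2 hh n m z) \<le> (4 + 2 / e) * (1 / 2) ^ (n + m)"
  proof (cases n)
    case (Suc k)
    have "cmod (dterm2 hh n m z) \<le> (2 * 2) * (1 / 2) ^ (Suc k + m)"
      unfolding dterm2_def using Suc norm_power_mult_bound_d2[OF r h _ z] by simp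
    then show ?thesis unfolding Suc[symmetric] by (rule *[OF _ C(2)])
  qed (use e in \<open>simp add: dterm2_def\<close>)
  show "cmod (dterm3 hh n m z) \<le> (4 + 2 / e) * (1 / 2) ^ (n + m)"
  proof (cases n)
    case (Suc k)
    have "cmod (dterm3 hh n m z) \<le> (2 / e) * (1 / 2) ^ (Suc k + m)"
      unfolding dterm3_def using Suc norm_power_mult_bound[OF r dh _ z] e by simp
    then show ?thesis unfolding Suc[symmetric] by (rule *[OF _ C(3)])
  qed (use e in \<open>simp add: dterm3_def\<close>)
qed

lemma partial_sums_sol_coeff_eq_term3:
  "(\<lambda>(N, M) (z1, z2, l). \<Sum>n\<in>{1..N}. \<Sum>m\<in>{..M}. sol_coeff n (int n - int m) (l, \<xi>, a, b, c, d) * z1 ^ n * z2 ^ m)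
    = (\<lambda>(N, M) x. \<Sum>n\<le>N. \<Sum>m\<le>M. term3 (\<lambda>k m l. coeff2 (formal_sol l \<xi> a b c d) k m) n m x)"
proof (intro ext)
  fix NM :: "nat \<times> nat" and x :: complex3
  obtain N M where NM: "NM = (N, M)" by (cases NM)
  obtain z1 z2 l where x: "x = (z1, z2, l)" by (cases x) auto
  let ?h = "\<lambda>k m l. coeff2 (formal_sol l \<xi> a b c d) k m"
  have "(\<Sum>n\<le>N. \<Sum>m\<le>M. term3 ?h n m (z1, z2, l)) = (\<Sum>n\<in>{1..N}. \<Sum>m\<le>M. term3 ?h n m (z1, z2, l))"
    by (subst sum_atMost_split_0) (simp add: term3_def)
  also have "\<dots> = (\<Sum>n\<in>{1..N}. \<Sum>m\<in>{..M}. sol_coeff n (int n - int m) (l, \<xi>, a, b, c, d) * z1 ^ n * z2 ^ m)"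
    by (intro sum.cong refl) (auto simp: term3_def sol_coeff_eq_formal_sol)
  finally show "(\<lambda>(N, M) (z1, z2, l). \<Sum>n\<in>{1..N}. \<Sum>m\<in>{..M}.
      sol_coeff n (int n - int m) (l, \<xi>, a, b, c, d) * z1 ^ n * z2 ^ m) NM x
    = (\<lambda>(N, M) x. \<Sum>n\<le>N. \<Sum>m\<le>M. term3 ?h n m x) NM x"
    by (simp add: NM x)
qed

theorem formal_sol_series_converges:
  fixes \<xi> a b c d :: complex and L :: "complex set"
  assumes \<xi>: "\<xi> \<noteq> 0" "norm \<xi> < 1" and nz: "a \<noteq> 0" "b \<noteq> 0" "c \<noteq> 0" "d \<noteq> 0"
    and L: "open L" "closure L \<subseteq> L0s \<xi>"
  shows "\<exists>Z :: (complex \<times> complex) set. \<exists>F. open Z \<and> (0, 0) \<in> Z \<and>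
      holo3 F {(z1, z2, l). (z1, z2) \<in> Z \<and> l \<in> L} \<and>
      uniform_limit {(z1, z2, l). (z1, z2) \<in> Z \<and> l \<in> L}
        (\<lambda>(N, M) (z1, z2, l). \<Sum>n\<in>{1..N}. \<Sum>m\<in>{..M}.
            sol_coeff n (int n - int m) (l, \<xi>, a, b, c, d) * z1 ^ n * z2 ^ m)
        F (sequentially \<times>\<^sub>F sequentially)"
proof -
  have "closure L \<subseteq> cball 0 (inverse (norm \<xi>))" using L(2) by (auto simp: L0s_def)
  then have "compact (closure L)"
    using bounded_subset[OF bounded_cball] by (auto simp: compact_eq_bounded_closed)
  then obtain e R1 R2 where e: "0 < e" and R: "1 < R1" "R1 \<le> R2" "R2 < inverse (norm \<xi>)"
    and ann: "\<And>x y. x \<in> closure L \<Longrightarrow> y \<in> cball x e \<Longrightarrow> R1 \<le> norm y \<and> norm y \<le> R2"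
    using annulus_margin[OF \<xi>(2,1) _ L(2)] by blast
  obtain r where r: "0 < r" "r \<le> 1"
    and bound: "\<And>y k m. R1 \<le> norm y \<Longrightarrow> norm y \<le> R2 \<Longrightarrow>
      cmod (coeff2 (formal_sol y \<xi> a b c d) k m) \<le> 2 / r ^ (k + m)"
    using formal_sol_coeff_bound_annulus[OF \<xi> nz R] by blast
  define hh where "hh = (\<lambda>k m l. coeff2 (formal_sol l \<xi> a b c d) k m)"
  have cball: "cball l e \<subseteq> L0s \<xi>" if "l \<in> closure L" for l
  proof
    fix y assume "y \<in> cball l e"
    then show "y \<in> L0s \<xi>" using ann[OF that] R by (fastforce simp: L0s_def)
  qed
  have h: "cmod (hh k m y) \<le> 2 / r ^ (k + m)" if "y \<in> cball l e" "l \<in> closure L" for k m l y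
    using ann[OF that(2,1)] bound by (simp add: hh_def)
  have holo: "hh k m holomorphic_on L0s \<xi>" for k m
    unfolding hh_def by (rule holomorphic_coeff2_formal_sol[OF \<xi>(2,1) nz])
  have dh: "cmod (deriv (hh k m) l) \<le> (2 / e) / r ^ (k + m)" if "l \<in> closure L" for k m l
    using norm_deriv_le_Cauchy[OF holo cball[OF that] e h[OF _ that]]
    by (simp add: divide_divide_eq_left mult.commute)
  define Z where "Z = ball (0::complex) (r / 4) \<times> ball (0::complex) (r / 4)"
  define \<Omega> where "\<Omega> = {(z1, z2, l). (z1, z2) \<in> Z \<and> l \<in> L}"
  have \<Omega>: "\<Omega> = ball 0 (r / 4) \<times> (ball 0 (r / 4) \<times> L)" by (auto simp: \<Omega>_def Z_def)
  have z: "cmod (fst z) \<le> r / 4" "cmod (fst (snd z)) \<le> r / 4" "snd (snd z) \<in> closure L"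
    if "z \<in> \<Omega>" for z
    using that closure_subset[of L] by (auto simp: \<Omega>)
  have b: "cmod (term3 hh n m z) \<le> (4 + 2 / e) * (1 / 2) ^ (n + m)"
    "cmod (dterm1 hh n m z) \<le> (4 + 2 / e) * (1 / 2) ^ (n + m)"
    "cmod (dterm2 hh n m z) \<le> (4 + 2 / e) * (1 / 2) ^ (n + m)"
    "cmod (dterm3 hh n m z) \<le> (4 + 2 / e) * (1 / 2) ^ (n + m)" if "z \<in> \<Omega>" for z n m
  proof -
    have "snd (snd z) \<in> cball (snd (snd z)) e" using e by simp
    note h' = h[OF this z(3)[OF that]] and dh' = dh[OF z(3)[OF that]]
    show "cmod (term3 hh n m z) \<le> (4 + 2 / e) * (1 / 2) ^ (n + m)"
      "cmod (dterm1 hh n m z) \<le> (4 + 2 / e) * (1 / 2) ^ (n + m)"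
      "cmod (dterm2 hh n m z) \<le> (4 + 2 / e) * (1 / 2) ^ (n + m)"
      "cmod (dterm3 hh n m z) \<le> (4 + 2 / e) * (1 / 2) ^ (n + m)"
      using term3_bounds[OF r e h' dh' z(1,2)[OF that]] by simp_all
  qed
  have H: "holo3 (\<lambda>z. \<Sum>n. \<Sum>m. term3 hh n m z) \<Omega>"
  proof (rule holo3_double_series[OF _ open_L0s _ holo _ _ b])
    show "open \<Omega>" unfolding \<Omega> using L(1) by (simp add: open_Times)
    show "snd (snd z) \<in> L0s \<xi>" if "z \<in> \<Omega>" for z using z(3)[OF that] L(2) by auto
  qed auto
  have U: "uniform_limit \<Omega> (\<lambda>(N, M) x. \<Sum>n\<le>N. \<Sum>m\<le>M. term3 hh n m x) (\<lambda>z. \<Sum>n. \<Sum>m. term3 hh n m z)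
      (sequentially \<times>\<^sub>F sequentially)"
    by (rule uniform_limit_double_sum[OF b(1)]) auto
  have feq: "(\<lambda>(N, M) (z1, z2, l). \<Sum>n\<in>{1..N}. \<Sum>m\<in>{..M}.
      sol_coeff n (int n - int m) (l, \<xi>, a, b, c, d) * z1 ^ n * z2 ^ m)
    = (\<lambda>(N, M) x. \<Sum>n\<le>N. \<Sum>m\<le>M. term3 hh n m x)"
    unfolding hh_def by (rule partial_sums_sol_coeff_eq_term3)
  show ?thesis
    using H U r unfolding \<Omega>_def feq by (intro exI[of _ Z] exI[of _ "\<lambda>z. \<Sum>n. \<Sum>m. term3 hh n m z"])
      (auto simp: Z_def open_Times)
qed

theorem mainTheorem9:
  "\<exists>X :: nat \<Rightarrow> int \<Rightarrow> params \<Rightarrow> complex.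
     (\<forall>n i. rational_regular_on (X n i) regular_params) \<and>
     (\<forall>\<Lambda> \<xi> a b c d. (\<Lambda>, \<xi>, a, b, c, d) \<in> regular_params \<longrightarrow>
        ansatz (\<lambda>n i. X n i (\<Lambda>, \<xi>, a, b, c, d)) \<and> X 1 1 (\<Lambda>, \<xi>, a, b, c, d) = 1 \<and>
        qPA1_sol \<Lambda> \<xi> a b c d (\<lambda>n i. X n i (\<Lambda>, \<xi>, a, b, c, d)) \<and>
        (\<forall>y. ansatz y \<and> y 1 1 = 1 \<and> qPA1_sol \<Lambda> \<xi> a b c d y \<longrightarrow>
             y = (\<lambda>n i. X n i (\<Lambda>, \<xi>, a, b, c, d)))) \<and>
     (\<forall>\<xi> a b c d. \<xi> \<noteq> 0 \<and> norm \<xi> < 1 \<and> a \<noteq> 0 \<and> b \<noteq> 0 \<and> c \<noteq> 0 \<and> d \<noteq> 0 \<longrightarrow>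
        (\<forall>\<Lambda>\<in>L0s \<xi>. nonres \<Lambda> \<xi>) \<and>
        (\<forall>L. open L \<and> closure L \<subseteq> L0s \<xi> \<longrightarrow>
           (\<exists>Z :: (complex \<times> complex) set. \<exists>F. open Z \<and> (0, 0) \<in> Z \<and>
              holo3 F {(z1, z2, l). (z1, z2) \<in> Z \<and> l \<in> L} \<and>
              uniform_limit {(z1, z2, l). (z1, z2) \<in> Z \<and> l \<in> L}
                (\<lambda>(N, M) (z1, z2, l). \<Sum>n\<in>{1..N}. \<Sum>m\<in>{..M}.
                    X n (int n - int m) (l, \<xi>, a, b, c, d) * z1 ^ n * z2 ^ m)
                F (sequentially \<times>\<^sub>F sequentially))))"
  by (intro exI[of _ sol_coeff] conjI allI impI ballI rational_regular_on_sol_coeff ansatz_sol_coeff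
      sol_coeff_1_1 sol_coeff_unique_solution nonres_L0s formal_sol_series_converges) auto

end
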